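(* Let $(Y_t,t\ge0)$ be a supercritical ($b<0$) CBI$(\Psi,\Phi)$ process and assume $\int_0\frac{\Phi(u)}{|\Psi(u)|}\,\mathrm{d}u=\infty$ (divergence near $0$). Then for any positive deterministic function $(\eta(t),t\ge0)$, if $(\eta(t)Y_t,t\ge0)$ converges almost surely as $t\to\infty$, its limit is either $0$ almost surely or $\infty$ almost surely.
   Context: Let $\sigma\ge 0$, $b\in\mathbb R$, $\beta\ge 0$, and let $\pi,\nu$ be $\sigma$-finite measures on $(0,\infty)$ with $\int_0^\infty (z\wedge z^2)\pi(\mathrm{d}z)<\infty$ and $\int_0^\infty(1\wedge z)\nu(\mathrm{d}z)<\infty$. The branching mechanism is $\Psi(q)=bq+\frac12\sigma^2q^2+\int_0^\infty(e^{-qu}-1+qu)\pi(\mathrm{d}u)$ and the immigration mechanism is $\Phi(q)=\beta q+\int_0^\infty(1-e^{-qu})\nu(\mathrm{d}u)$, $q\ge 0$; it is assumed that $\Phi(q)>0$ for all $q>0$. For $\lambda\ge 0$, $t\mapsto v_t(\lambda)$ solves $\frac{\partial}{\partial t}v_t(\lambda)=-\Psi(v_t(\lambda))$, $v_0(\lambda)=\lambda$. A CBI$(\Psi,\Phi)$ process is a $[0,\infty)$-valued Markov process $(Y_t)$ with $\mathbb E_x[e^{-\lambda Y_t}]=\exp\big(-xv_t(\lambda)-\int_0^t\Phi(v_s(\lambda))\mathrm{d}s\big)$, where $\mathbb E_x$ refers to the process started at $x\ge0$. *)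

theory Defs
  imports "HOL-Probability.Probability"
begin

definition Psi :: "real \<Rightarrow> real \<Rightarrow> real measure \<Rightarrow> real \<Rightarrow> real" where
  "Psi b \<sigma> \<pi> q = b * q + \<sigma>\<^sup>2 * q\<^sup>2 / 2 + (\<integral>u. (exp (- q * u) - 1 + q * u) \<partial>\<pi>)"

definition Phi :: "real \<Rightarrow> real measure \<Rightarrow> real \<Rightarrow> real" where
  "Phi \<beta> \<nu> q = \<beta> * q + (\<integral>u. (1 - exp (- q * u)) \<partial>\<nu>)"

definition branching_params :: "real \<Rightarrow> real \<Rightarrow> real measure \<Rightarrow> bool" where
  "branching_params b \<sigma> \<pi> \<longleftrightarrow>
     \<sigma> \<ge> 0 \<and> sets \<pi> = sets borel \<and> sigma_finite_measure \<pi> \<and>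
     emeasure \<pi> {..0} = 0 \<and> (\<integral>\<^sup>+ z. ennreal (min z (z\<^sup>2)) \<partial>\<pi>) < \<infinity>"

definition immigration_params :: "real \<Rightarrow> real measure \<Rightarrow> bool" where
  "immigration_params \<beta> \<nu> \<longleftrightarrow>
     \<beta> \<ge> 0 \<and> sets \<nu> = sets borel \<and> sigma_finite_measure \<nu> \<and>
     emeasure \<nu> {..0} = 0 \<and> (\<integral>\<^sup>+ z. ennreal (min 1 z) \<partial>\<nu>) < \<infinity> \<and>
     (\<forall>q>0. Phi \<beta> \<nu> q > 0)"

definition solves_v :: "(real \<Rightarrow> real) \<Rightarrow> (real \<Rightarrow> real \<Rightarrow> real) \<Rightarrow> bool" where
  "solves_v Ps v \<longleftrightarrow>
     (\<forall>l\<ge>0. v 0 l = l \<and>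
        (\<forall>t\<ge>0. v t l \<ge> 0 \<and>
           ((\<lambda>s. v s l) has_real_derivative (- Ps (v t l))) (at t within {0..})))"

definition natural_filtration :: "'a measure \<Rightarrow> (real \<Rightarrow> 'a \<Rightarrow> real) \<Rightarrow> real \<Rightarrow> 'a measure" where
  "natural_filtration M Y s =
     sigma (space M) {Y r -` A \<inter> space M | r A. r \<in> {0..s} \<and> A \<in> sets borel}"

definition CBI :: "'a measure \<Rightarrow> (real \<Rightarrow> real) \<Rightarrow> (real \<Rightarrow> real \<Rightarrow> real) \<Rightarrow> real
                    \<Rightarrow> (real \<Rightarrow> 'a \<Rightarrow> real) \<Rightarrow> bool" where
  "CBI M Ph v x Y \<longleftrightarrow>
     prob_space M \<and>
     (\<forall>t\<ge>0. Y t \<in> borel_measurable M \<and> (\<forall>\<omega>\<in>space M. Y t \<omega> \<ge> 0)) \<and>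
     (AE \<omega> in M. Y 0 \<omega> = x) \<and>
     (\<forall>s\<ge>0. \<forall>t\<ge>0. \<forall>l\<ge>0. AE \<omega> in M.
        real_cond_exp M (natural_filtration M Y s) (\<lambda>\<omega>. exp (- l * Y (s + t) \<omega>)) \<omega>
          = exp (- Y s \<omega> * v t l - integral {0..t} (\<lambda>r. Ph (v r l))))"

end

theory Submission
  imports Defs
begin

text \<open>Let \<open>W\<close> be the a.s. limit of \<open>\<eta>(t) Y\<^sub>t\<close> and \<open>Z\<^sub>\<lambda> = exp (- \<lambda> W)\<close> (zero where
  \<open>W = \<infinity>\<close>), the a.s. limit of \<open>exp (- \<lambda> \<eta>(n) Y\<^sub>n)\<close>. If \<open>E Z\<^sub>1 = 0\<close>, then \<open>W = \<infinity>\<close> a.s.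
  Otherwise the Laplace exponents \<open>x v\<^sub>n(\<eta>(n)) + \<integral>\<^sub>0\<^sup>n \<Phi>(v\<^sub>r(\<eta>(n))) dr\<close> of \<open>Y\<^sub>n\<close> converge, hence
  stay bounded. Since they grow at least like \<open>n \<Phi>(\<eta>(n))\<close>, this forces \<open>\<eta>(n) \<rightarrow> 0\<close>; since the flow
  started at \<open>\<eta>(n)\<close> collects at least \<open>\<integral> \<Phi>/|\<Psi>|\<close> over the levels it passes, the divergence of
  \<open>\<integral>\<^sub>0 \<Phi>/|\<Psi>|\<close> forces \<open>v\<^sub>n(\<eta>(n)) \<rightarrow> 0\<close>. By the Markov property \<open>Z\<^sub>1\<close> is then independent of
  every \<open>F\<^sub>m\<close>, hence of itself, so \<open>W\<close> is an a.s. constant \<open>c\<close>. Finally the Laplace exponents at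
  \<open>2 \<eta>(n)\<close> and \<open>\<eta>(n)\<close> tend to \<open>2 c\<close> and \<open>c\<close>, while their difference tends to \<open>0\<close>: near \<open>0\<close> the
  flow needs time at most \<open>2 / |b|\<close> to climb from \<open>a\<close> to \<open>2 a\<close>, so the two trajectories collect
  almost the same immigration. Hence \<open>c = 0\<close>.\<close>

section \<open>Integration preliminaries\<close>

lemma continuous_on_integral_dominated:
  fixes F :: "'a::metric_space \<Rightarrow> 'b \<Rightarrow> 'c::{banach, second_countable_topology}"
  assumes "\<And>q. q \<in> S \<Longrightarrow> F q \<in> borel_measurable \<mu>"
    and "integrable \<mu> w"
    and "AE z in \<mu>. continuous_on S (\<lambda>q. F q z)"
    and "\<And>q. q \<in> S \<Longrightarrow> AE z in \<mu>. norm (F q z) \<le> w z"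
  shows "continuous_on S (\<lambda>q. \<integral>z. F q z \<partial>\<mu>)"
  unfolding continuous_on_sequentially comp_def
proof (intro allI ballI impI)
  fix s a assume a: "a \<in> S" and s: "(\<forall>n. s n \<in> S) \<and> s \<longlonglongrightarrow> a"
  show "(\<lambda>n. \<integral>z. F (s n) z \<partial>\<mu>) \<longlonglongrightarrow> (\<integral>z. F a z \<partial>\<mu>)"
  proof (rule integral_dominated_convergence[where w=w])
    show "AE z in \<mu>. (\<lambda>n. F (s n) z) \<longlonglongrightarrow> F a z"
      using assms(3) by eventually_elim (use a s in \<open>auto simp: continuous_on_sequentially comp_def\<close>)
  qed (use assms a s in auto)
qed

lemma nn_integral_indicator_Icc_eq_integral:
  fixes g :: "real \<Rightarrow> real"
  assumes "continuous_on {a..b} g" "\<And>u. u \<in> {a..b} \<Longrightarrow> 0 \<le> g u"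
  shows "(\<integral>\<^sup>+ u. ennreal (indicator {a..b} u * g u) \<partial>lborel) = ennreal (integral {a..b} g)"
  using assms by (intro nn_integral_has_integral_lebesgue) (auto intro: integrable_integral integrable_continuous_real)

lemma nn_integral_Ioc_le_if_integrals_le:
  fixes g :: "real \<Rightarrow> real"
  assumes e: "0 < e"
    and cont: "\<And>h. 0 < h \<Longrightarrow> continuous_on {h..e} g"
    and nonneg: "\<And>u. 0 < u \<Longrightarrow> u \<le> e \<Longrightarrow> 0 \<le> g u"
    and bound: "\<And>h. 0 < h \<Longrightarrow> h \<le> e \<Longrightarrow> integral {h..e} g \<le> K"
  shows "(\<integral>\<^sup>+ u\<in>{0<..e}. ennreal (g u) \<partial>lborel) \<le> ennreal K"
proof -
  define f where "f j u = ennreal (indicator {e / Suc j..e} u * g u)" for j u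
  have h: "0 < e / Suc j" "e / Suc j \<le> e" for j
    using e by (auto simp: divide_simps)
  have "incseq f"
  proof (rule incseq_SucI, rule le_funI)
    fix j u
    have "e / Suc (Suc j) \<le> e / Suc j" using e by (intro divide_left_mono) auto
    then show "f j u \<le> f (Suc j) u"
      unfolding f_def using nonneg[of u] h[of j] by (auto split: split_indicator intro!: ennreal_leI)
  qed
  moreover have "f j \<in> borel_measurable lborel" for j
  proof -
    have "(\<lambda>u. indicator {e / Suc j..e} u *\<^sub>R g u) \<in> borel_measurable borel"
      by (rule borel_measurable_continuous_on_indicator) (use cont h in auto)
    then show ?thesis unfolding f_def by simp
  qed
  ultimately have "(\<integral>\<^sup>+ u. (SUP j. f j u) \<partial>lborel) = (SUP j. integral\<^sup>N lborel (f j))"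
    by (rule nn_integral_monotone_convergence_SUP)
  also have "\<dots> \<le> ennreal K"
  proof (rule SUP_least)
    fix j
    have "integral\<^sup>N lborel (f j) = ennreal (integral {e / Suc j..e} g)"
      unfolding f_def using cont[OF h(1)] nonneg h(1)[of j] by (intro nn_integral_indicator_Icc_eq_integral) auto
    then show "integral\<^sup>N lborel (f j) \<le> ennreal K" using bound[OF h[of j]] by (simp add: ennreal_leI)
  qed
  finally have sup: "(\<integral>\<^sup>+ u. (SUP j. f j u) \<partial>lborel) \<le> ennreal K" .
  have "ennreal (g u) * indicator {0<..e} u \<le> (SUP j. f j u)" for u
  proof (cases "u \<in> {0<..e}")
    case True
    then obtain j where "e < real j * u" using ex_less_of_nat_mult[of u e] by auto
    then have "e \<le> u * Suc j" using True by (simp add: algebra_simps)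
    then have "e / Suc j \<le> u" by (simp add: divide_simps)
    then have "f j u = ennreal (g u) * indicator {0<..e} u" unfolding f_def using True by auto
    then show ?thesis using SUP_upper[of j UNIV "\<lambda>j. f j u"] by simp
  qed simp
  then have "(\<integral>\<^sup>+ u\<in>{0<..e}. ennreal (g u) \<partial>lborel) \<le> (\<integral>\<^sup>+ u. (SUP j. f j u) \<partial>lborel)"
    by (intro nn_integral_mono)
  with sup show ?thesis by order
qed

lemma (in prob_space) emeasure_proportional_sigma_sets:
  assumes P: "Int_stable P" "P \<subseteq> sets M" "space M \<in> P"
    and N: "sets N = sets M" "c \<noteq> \<infinity>"
    and proportional: "\<And>A. A \<in> P \<Longrightarrow> emeasure N A = c * emeasure M A"
    and A: "A \<in> sigma_sets (space M) P"
  shows "emeasure N A = c * emeasure M A"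
proof -
  have sigma: "sigma_sets (space M) P \<subseteq> sets M" by (rule sets.sigma_sets_subset[OF P(2)])
  have "P \<subseteq> Pow (space M)" using P(2) sets.sets_into_space by auto
  from P(1) this A show ?thesis
  proof (induction rule: sigma_sets_induct_disjoint)
    case (basic A)
    then show ?case by (rule proportional)
  next
    case (compl A)
    then have A: "A \<in> sets M" using sigma by auto
    have "emeasure N (space M - A) = emeasure N (space M) - emeasure N A"
      using emeasure_compl[of A N] A compl(2) N sets_eq_imp_space_eq[OF N(1)]
      by (simp add: ennreal_mult_eq_top_iff)
    also have "\<dots> = c * emeasure M (space M) - c * emeasure M A"
      using proportional[OF P(3)] compl(2) by simp
    also have "\<dots> = c * (emeasure M (space M) - emeasure M A)"
      using N(2) by (simp add: ennreal_right_diff_distrib)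
    also have "\<dots> = c * emeasure M (space M - A)" using emeasure_compl[of A M] A by simp
    finally show ?case .
  next
    case (union A)
    then have "range A \<subseteq> sets M" using sigma by auto
    then show ?case using suminf_emeasure[of A N] suminf_emeasure[of A M] union N(1) by simp
  qed simp
qed

lemma (in prob_space) set_integral_proportional_sigma_sets:
  fixes Z :: "'a \<Rightarrow> real"
  assumes P: "Int_stable P" "P \<subseteq> sets M" "space M \<in> P"
    and Z: "integrable M Z" "AE \<omega> in M. 0 \<le> Z \<omega>"
    and proportional: "\<And>A. A \<in> P \<Longrightarrow> (\<integral>\<omega>\<in>A. Z \<omega> \<partial>M) = c * prob A"
    and A: "A \<in> sigma_sets (space M) P"
  shows "(\<integral>\<omega>\<in>A. Z \<omega> \<partial>M) = c * prob A"
proof -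
  have nonneg_integral: "0 \<le> (\<integral>\<omega>\<in>A. Z \<omega> \<partial>M)" for A
    unfolding set_lebesgue_integral_def
    using Z(2) by (intro integral_nonneg_AE) (auto split: split_indicator elim: eventually_mono)
  have c: "0 \<le> c" using proportional[OF P(3)] nonneg_integral[of "space M"] by (simp add: prob_space)
  define N where "N = density M (\<lambda>\<omega>. ennreal (Z \<omega>))"
  have N: "emeasure N A = ennreal (\<integral>\<omega>\<in>A. Z \<omega> \<partial>M)" if "A \<in> sets M" for A
    unfolding N_def using that Z nn_set_integral_eq_set_integral[OF Z(1) _ that]
    by (simp add: emeasure_density eventually_mono)
  have "A \<in> sets M" using A sets.sigma_sets_subset[OF P(2)] by auto
  moreover have "emeasure N A = ennreal c * emeasure M A"
  proof (rule emeasure_proportional_sigma_sets[OF P _ _ _ A])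
    fix B assume B: "B \<in> P"
    then have "B \<in> sets M" using P(2) by auto
    then show "emeasure N B = ennreal c * emeasure M B"
      using N proportional[OF B] c by (simp add: ennreal_mult emeasure_eq_measure)
  qed (simp_all add: N_def)
  ultimately have "ennreal (\<integral>\<omega>\<in>A. Z \<omega> \<partial>M) = ennreal (c * prob A)"
    using N c by (simp add: ennreal_mult emeasure_eq_measure)
  then show ?thesis using nonneg_integral[of A] c by simp
qed

lemma (in prob_space) AE_eq_if_set_integral_proportional:
  fixes Z :: "'a \<Rightarrow> real"
  assumes Z: "integrable M Z" and F: "subalgebra M F" "Z \<in> borel_measurable F"
    and proportional: "\<And>A. A \<in> sets F \<Longrightarrow> (\<integral>\<omega>\<in>A. Z \<omega> \<partial>M) = c * prob A"
  shows "AE \<omega> in M. Z \<omega> = c"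
proof -
  have int: "integrable M (\<lambda>\<omega>. indicator A \<omega> * (Z \<omega> - c))" if "A \<in> sets F" for A
    using that F(1) Z integrable_mult_indicator[of A M "\<lambda>\<omega>. Z \<omega> - c"] by (auto simp: subalgebra_def)
  have zero: "(\<integral>\<omega>. indicator A \<omega> * (Z \<omega> - c) \<partial>M) = 0" if A: "A \<in> sets F" for A
  proof -
    have AM: "A \<in> sets M" using A F(1) by (auto simp: subalgebra_def)
    have "(\<integral>\<omega>. indicator A \<omega> * (Z \<omega> - c) \<partial>M) = (\<integral>\<omega>. indicator A \<omega> * Z \<omega> - indicator A \<omega> * c \<partial>M)"
      by (simp add: right_diff_distrib)
    also have "\<dots> = (\<integral>\<omega>\<in>A. Z \<omega> \<partial>M) - (\<integral>\<omega>\<in>A. c \<partial>M)"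
      unfolding set_lebesgue_integral_def
      using integrable_mult_indicator[OF AM Z] integrable_mult_indicator[OF AM integrable_const[of c]]
      by (simp add: Bochner_Integration.integral_diff)
    finally show ?thesis using proportional[OF A] AM by (simp add: set_integral_const)
  qed
  have "space F = space M" using F(1) by (simp add: subalgebra_def)
  moreover note [measurable] = F(2)
  have "{\<omega> \<in> space F. c < Z \<omega>} \<in> sets F" "{\<omega> \<in> space F. Z \<omega> < c} \<in> sets F" by measurable
  ultimately have F_sets: "{\<omega> \<in> space M. c < Z \<omega>} \<in> sets F" "{\<omega> \<in> space M. Z \<omega> < c} \<in> sets F"
    by simp_all
  have "AE \<omega> in M. indicator {\<omega> \<in> space M. c < Z \<omega>} \<omega> * (Z \<omega> - c) = 0"
    using zero[OF F_sets(1)] int[OF F_sets(1)]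
    by (subst integral_nonneg_eq_0_iff_AE[symmetric]) (auto split: split_indicator)
  moreover have "AE \<omega> in M. - (indicator {\<omega> \<in> space M. Z \<omega> < c} \<omega> * (Z \<omega> - c)) = 0"
    using zero[OF F_sets(2)] int[OF F_sets(2)]
    by (subst integral_nonneg_eq_0_iff_AE[symmetric]) (auto split: split_indicator)
  moreover note AE_space
  ultimately show ?thesis
    by eventually_elim (auto split: split_indicator_asm)
qed

section \<open>The branching and immigration mechanisms\<close>

lemma exp_minus_remainder_bounds:
  fixes y :: real
  assumes "0 \<le> y"
  shows "0 \<le> exp (- y) - 1 + y" "exp (- y) - 1 + y \<le> y" "exp (- y) - 1 + y \<le> y\<^sup>2 / 2"
proof -
  show "0 \<le> exp (- y) - 1 + y" using exp_ge_add_one_self[of "- y"] by simp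
  show "exp (- y) - 1 + y \<le> y" using assms by simp
  have "exp (- y) - 1 + y - y\<^sup>2 / 2 \<le> exp (- 0) - 1 + 0 - 0\<^sup>2 / 2"
  proof (rule DERIV_nonpos_imp_nonincreasing[OF assms])
    fix t :: real
    have "((\<lambda>t. exp (- t) - 1 + t - t\<^sup>2 / 2) has_real_derivative (1 - t - exp (- t))) (at t)"
      by (auto intro!: derivative_eq_intros simp: power2_eq_square)
    moreover have "1 - t - exp (- t) \<le> 0" using exp_ge_add_one_self[of "- t"] by simp
    ultimately show "\<exists>D. ((\<lambda>t. exp (- t) - 1 + t - t\<^sup>2 / 2) has_real_derivative D) (at t) \<and> D \<le> 0"
      by blast
  qed
  then show "exp (- y) - 1 + y \<le> y\<^sup>2 / 2" by simp
qed

lemma AE_pos_if_emeasure_atMost_0: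
  fixes \<mu> :: "real measure"
  assumes "sets \<mu> = sets borel" "emeasure \<mu> {..0} = 0"
  shows "AE z in \<mu>. 0 < z"
  by (rule AE_I'[of "{..0}"]) (use assms in auto)

lemma branching_paramsD:
  assumes "branching_params b \<sigma> \<pi>"
  shows "sets \<pi> = sets borel" "AE z in \<pi>. 0 < z" "integrable \<pi> (\<lambda>z. min z (z\<^sup>2))"
proof -
  show sets: "sets \<pi> = sets borel" and pos: "AE z in \<pi>. 0 < z"
    using assms AE_pos_if_emeasure_atMost_0[of \<pi>] unfolding branching_params_def by auto
  note [measurable_cong] = sets
  show "integrable \<pi> (\<lambda>z. min z (z\<^sup>2))"
    by (rule integrableI_nonneg) (use assms pos in \<open>auto simp: branching_params_def\<close>)
qed

lemma immigration_paramsD: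
  assumes "immigration_params \<beta> \<nu>"
  shows "sets \<nu> = sets borel" "AE z in \<nu>. 0 < z" "integrable \<nu> (\<lambda>z. min 1 z)"
    "0 \<le> \<beta>" "\<And>q. 0 < q \<Longrightarrow> 0 < Phi \<beta> \<nu> q"
proof -
  show sets: "sets \<nu> = sets borel" and pos: "AE z in \<nu>. 0 < z"
    using assms AE_pos_if_emeasure_atMost_0[of \<nu>] unfolding immigration_params_def by auto
  note [measurable_cong] = sets
  show "integrable \<nu> (\<lambda>z. min 1 z)"
    by (rule integrableI_nonneg) (use assms pos in \<open>auto simp: immigration_params_def\<close>)
  show "0 \<le> \<beta>" "\<And>q. 0 < q \<Longrightarrow> 0 < Phi \<beta> \<nu> q"
    using assms unfolding immigration_params_def by auto
qed

lemma Phi_integrand_bound: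
  fixes q z :: real
  assumes "0 \<le> q" "0 < z"
  shows "\<bar>1 - exp (- q * z)\<bar> \<le> (q + 1) * min 1 z"
proof -
  have e: "0 \<le> 1 - exp (- q * z)" "1 - exp (- q * z) \<le> q * z" "1 - exp (- q * z) \<le> 1"
    using assms exp_ge_add_one_self[of "- (q * z)"] by auto
  show ?thesis
  proof (cases "z \<le> 1")
    case True
    have "q * z \<le> (q + 1) * z" using assms by simp
    then show ?thesis using e True by (simp only: abs_of_nonneg min_absorb2)
  next
    case False
    then have "min 1 z = 1" by simp
    then show ?thesis unfolding abs_of_nonneg[OF e(1)] using e(3) assms(1) by (simp only: mult_1_right)
  qed
qed

lemma Psi_integrand_bound:
  fixes u z :: real
  assumes "0 \<le> u" "0 < z"
  shows "\<bar>exp (- u * z) - 1 + u * z\<bar> \<le> (u + u\<^sup>2) * min z (z\<^sup>2)"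
proof -
  have "0 \<le> u * z" using assms by simp
  note r = exp_minus_remainder_bounds[OF this]
  have "\<bar>exp (- (u * z)) - 1 + u * z\<bar> \<le> (u + u\<^sup>2) * min z (z\<^sup>2)"
  proof (cases "z \<le> 1")
    case True
    then have "z\<^sup>2 \<le> z" using assms by (simp add: power2_eq_square mult_left_le_one_le)
    moreover have "(u * z)\<^sup>2 / 2 \<le> (u + u\<^sup>2) * z\<^sup>2"
      using assms by (simp add: power_mult_distrib mult_right_mono)
    ultimately show ?thesis using r by (simp only: abs_of_nonneg min_absorb2)
  next
    case False
    then have "z \<le> z\<^sup>2" by (simp add: power2_eq_square)
    moreover have "u * z \<le> (u + u\<^sup>2) * z" using assms by (intro mult_right_mono) auto
    ultimately show ?thesis using r by (simp only: abs_of_nonneg min_absorb1)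
  qed
  then show ?thesis by simp
qed

lemma integrable_Phi_integrand:
  assumes "immigration_params \<beta> \<nu>" "0 \<le> q"
  shows "integrable \<nu> (\<lambda>z. 1 - exp (- q * z))"
proof (rule Bochner_Integration.integrable_bound)
  note [measurable_cong] = immigration_paramsD(1)[OF assms(1)]
  show "(\<lambda>z. 1 - exp (- q * z)) \<in> borel_measurable \<nu>" by measurable
  show "integrable \<nu> (\<lambda>z. (q + 1) * min 1 z)" using immigration_paramsD(3)[OF assms(1)] by simp
  show "AE z in \<nu>. norm (1 - exp (- q * z)) \<le> norm ((q + 1) * min 1 z)"
    using immigration_paramsD(2)[OF assms(1)]
    by eventually_elim (use Phi_integrand_bound assms(2) in auto)
qed

lemma continuous_on_Phi:
  assumes "immigration_params \<beta> \<nu>"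
  shows "continuous_on {0..Q} (Phi \<beta> \<nu>)"
proof -
  note [measurable_cong] = immigration_paramsD(1)[OF assms]
  have "continuous_on {0..Q} (\<lambda>q. \<integral>z. 1 - exp (- q * z) \<partial>\<nu>)"
  proof (rule continuous_on_integral_dominated[where w="\<lambda>z. (Q + 1) * min 1 z"])
    show "AE z in \<nu>. norm (1 - exp (- q * z)) \<le> (Q + 1) * min 1 z" if "q \<in> {0..Q}" for q
      using immigration_paramsD(2)[OF assms]
    proof eventually_elim
      case (elim z)
      have "(q + 1) * min 1 z \<le> (Q + 1) * min 1 z" using that elim by (intro mult_right_mono) auto
      moreover have "\<bar>1 - exp (- q * z)\<bar> \<le> (q + 1) * min 1 z" using Phi_integrand_bound that elim by simp
      ultimately show ?case by simp
    qed
  qed (use immigration_paramsD(3)[OF assms] in \<open>auto intro!: continuous_intros\<close>)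
  then show ?thesis unfolding Phi_def by (auto intro!: continuous_intros)
qed

lemma Phi_mono:
  assumes "immigration_params \<beta> \<nu>" "0 \<le> p" "p \<le> q"
  shows "Phi \<beta> \<nu> p \<le> Phi \<beta> \<nu> q"
proof -
  have "(\<integral>z. 1 - exp (- p * z) \<partial>\<nu>) \<le> (\<integral>z. 1 - exp (- q * z) \<partial>\<nu>)"
    using assms integrable_Phi_integrand immigration_paramsD(2)[OF assms(1)]
    by (intro integral_mono_AE) (auto elim!: eventually_mono intro: mult_right_mono)
  moreover have "\<beta> * p \<le> \<beta> * q" using immigration_paramsD(4)[OF assms(1)] assms by (intro mult_left_mono)
  ultimately show ?thesis unfolding Phi_def by simp
qed

lemma Phi_zero [simp]: "Phi \<beta> \<nu> 0 = 0"
  unfolding Phi_def by simp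

lemma continuous_on_Psi:
  assumes "branching_params b \<sigma> \<pi>"
  shows "continuous_on {0..Q} (Psi b \<sigma> \<pi>)"
proof -
  note [measurable_cong] = branching_paramsD(1)[OF assms]
  have "continuous_on {0..Q} (\<lambda>u. \<integral>z. exp (- u * z) - 1 + u * z \<partial>\<pi>)"
  proof (rule continuous_on_integral_dominated[where w="\<lambda>z. (Q + Q\<^sup>2) * min z (z\<^sup>2)"])
    show "AE z in \<pi>. norm (exp (- u * z) - 1 + u * z) \<le> (Q + Q\<^sup>2) * min z (z\<^sup>2)" if "u \<in> {0..Q}" for u
      using branching_paramsD(2)[OF assms]
    proof eventually_elim
      case (elim z)
      have "u\<^sup>2 \<le> Q\<^sup>2" using that by (intro power_mono) auto
      with that have "u + u\<^sup>2 \<le> Q + Q\<^sup>2" by (simp add: add_mono)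
      then have "(u + u\<^sup>2) * min z (z\<^sup>2) \<le> (Q + Q\<^sup>2) * min z (z\<^sup>2)"
        using that elim by (intro mult_right_mono) auto
      moreover have "\<bar>exp (- u * z) - 1 + u * z\<bar> \<le> (u + u\<^sup>2) * min z (z\<^sup>2)"
        using Psi_integrand_bound that elim by simp
      ultimately show ?case by simp
    qed
  qed (use branching_paramsD(3)[OF assms] in \<open>auto intro!: continuous_intros\<close>)
  then show ?thesis unfolding Psi_def by (auto intro!: continuous_intros)
qed

lemma Psi_zero [simp]: "Psi b \<sigma> \<pi> 0 = 0"
  unfolding Psi_def by simp

lemma Psi_integrand_div_bounds:
  fixes u z :: real
  assumes "0 < u" "u \<le> 1" "0 < z"
  shows "0 \<le> (exp (- u * z) - 1 + u * z) / u" "(exp (- u * z) - 1 + u * z) / u \<le> u * z\<^sup>2 / 2"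
    and "(exp (- u * z) - 1 + u * z) / u \<le> 2 * min z (z\<^sup>2)"
proof -
  show "0 \<le> (exp (- u * z) - 1 + u * z) / u" "(exp (- u * z) - 1 + u * z) / u \<le> u * z\<^sup>2 / 2"
    using exp_minus_remainder_bounds[of "u * z"] assms
    by (simp_all add: divide_simps power2_eq_square algebra_simps)
  have "exp (- u * z) - 1 + u * z \<le> u * ((1 + u) * min z (z\<^sup>2))"
    using Psi_integrand_bound[of u z] assms by (simp add: power2_eq_square algebra_simps)
  also have "\<dots> \<le> u * (2 * min z (z\<^sup>2))"
    using assms by (intro mult_left_mono mult_right_mono) auto
  finally show "(exp (- u * z) - 1 + u * z) / u \<le> 2 * min z (z\<^sup>2)"
    using assms by (simp add: divide_simps mult.commute)
qed

lemma Psi_remainder_div_tendsto_0: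
  assumes "branching_params b \<sigma> \<pi>"
  shows "((\<lambda>u. \<integral>z. (exp (- u * z) - 1 + u * z) / u \<partial>\<pi>) \<longlongrightarrow> 0) (at_right 0)"
proof (rule tendsto_at_right_sequentially[of 0 1])
  note [measurable_cong] = branching_paramsD(1)[OF assms]
  fix s :: "nat \<Rightarrow> real" assume s: "\<And>n. 0 < s n" "\<And>n. s n < 1" "s \<longlonglongrightarrow> 0"
  have "(\<lambda>n. \<integral>z. (exp (- s n * z) - 1 + s n * z) / s n \<partial>\<pi>) \<longlonglongrightarrow> (\<integral>z. 0 \<partial>\<pi>)"
  proof (rule integral_dominated_convergence[where w="\<lambda>z. 2 * min z (z\<^sup>2)"])
    show "AE z in \<pi>. (\<lambda>n. (exp (- s n * z) - 1 + s n * z) / s n) \<longlonglongrightarrow> 0"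
      using branching_paramsD(2)[OF assms]
    proof eventually_elim
      case (elim z)
      show ?case
      proof (rule real_tendsto_sandwich[where f="\<lambda>_. 0" and h="\<lambda>n. s n * z\<^sup>2 / 2"])
        show "\<forall>\<^sub>F n in sequentially. 0 \<le> (exp (- s n * z) - 1 + s n * z) / s n"
          "\<forall>\<^sub>F n in sequentially. (exp (- s n * z) - 1 + s n * z) / s n \<le> s n * z\<^sup>2 / 2"
          using Psi_integrand_div_bounds(1,2)[OF s(1) less_imp_le[OF s(2)] elim]
          by (simp_all add: always_eventually)
        show "(\<lambda>n. s n * z\<^sup>2 / 2) \<longlonglongrightarrow> 0"
          using tendsto_mult[OF s(3) tendsto_const[of "z\<^sup>2 / 2"]] by simp
      qed simp
    qed
    show "AE z in \<pi>. norm ((exp (- s n * z) - 1 + s n * z) / s n) \<le> 2 * min z (z\<^sup>2)" for n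
      using branching_paramsD(2)[OF assms]
    proof eventually_elim
      case (elim z)
      show ?case using Psi_integrand_div_bounds(1,3)[OF s(1) less_imp_le[OF s(2)] elim, of n] by simp
    qed
  qed (use branching_paramsD(3)[OF assms] in auto)
  then show "(\<lambda>n. \<integral>z. (exp (- s n * z) - 1 + s n * z) / s n \<partial>\<pi>) \<longlonglongrightarrow> 0" by simp
qed simp

lemma Psi_div_tendsto_at_right_0:
  assumes "branching_params b \<sigma> \<pi>"
  shows "((\<lambda>u. Psi b \<sigma> \<pi> u / u) \<longlongrightarrow> b) (at_right 0)"
proof -
  define R where "R u = (\<integral>z. (exp (- u * z) - 1 + u * z) / u \<partial>\<pi>)" for u
  have "(R \<longlongrightarrow> 0) (at_right 0)"
    unfolding R_def by (rule Psi_remainder_div_tendsto_0[OF assms])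
  then have "((\<lambda>u. b + \<sigma>\<^sup>2 * u / 2 + R u) \<longlongrightarrow> b + \<sigma>\<^sup>2 * 0 / 2 + 0) (at_right 0)"
    by (intro tendsto_intros) auto
  moreover have "\<forall>\<^sub>F u in at_right 0. b + \<sigma>\<^sup>2 * u / 2 + R u = Psi b \<sigma> \<pi> u / u"
  proof (rule eventually_at_rightI[of 0 1])
    fix u :: real assume "u \<in> {0<..<1}"
    then show "b + \<sigma>\<^sup>2 * u / 2 + R u = Psi b \<sigma> \<pi> u / u"
      unfolding R_def Psi_def by (simp add: field_simps power2_eq_square)
  qed simp
  ultimately show ?thesis by (simp add: Lim_transform_eventually)
qed

lemma Psi_le_half_slope_near_0:
  assumes "branching_params b \<sigma> \<pi>" "b < 0"
  obtains d where "0 < d" "\<And>u. 0 \<le> u \<Longrightarrow> u \<le> d \<Longrightarrow> Psi b \<sigma> \<pi> u \<le> b / 2 * u"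
proof -
  have "\<forall>\<^sub>F u in at_right 0. Psi b \<sigma> \<pi> u / u < b / 2"
    using assms by (intro order_tendstoD(2)[OF Psi_div_tendsto_at_right_0]) auto
  then obtain c where c: "0 < c" "\<And>u. 0 < u \<Longrightarrow> u < c \<Longrightarrow> Psi b \<sigma> \<pi> u / u < b / 2"
    unfolding eventually_at_right_field by auto
  show ?thesis
  proof (rule that[of "c / 2"])
    fix u assume "0 \<le> u" "u \<le> c / 2"
    then show "Psi b \<sigma> \<pi> u \<le> b / 2 * u"
      using c(1) c(2)[of u] by (cases "u = 0") (auto simp: divide_simps)
  qed (use c in auto)
qed

section \<open>The cumulant semigroup near zero\<close>

text \<open>\<open>Ps\<close> and \<open>Ph\<close> stand for \<open>\<Psi>\<close> and \<open>\<Phi>\<close>; supercriticality enters only through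
  \<open>Ps u \<le> - k u\<close> near \<open>0\<close>.\<close>
locale supercritical_flow =
  fixes Ps Ph :: "real \<Rightarrow> real" and v :: "real \<Rightarrow> real \<Rightarrow> real" and d0 k :: real
  assumes d0: "0 < d0" and k: "0 < k"
    and Ps_le: "\<And>u. 0 \<le> u \<Longrightarrow> u \<le> d0 \<Longrightarrow> Ps u \<le> - k * u"
    and continuous_Ps: "continuous_on {0..d0} Ps"
    and continuous_Ph: "\<And>Q. continuous_on {0..Q} Ph"
    and Ph_mono: "\<And>p q. 0 \<le> p \<Longrightarrow> p \<le> q \<Longrightarrow> Ph p \<le> Ph q"
    and Ph_pos: "\<And>q. 0 < q \<Longrightarrow> 0 < Ph q"
    and Ph_0: "Ph 0 = 0"
    and solves_v: "solves_v Ps v"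
begin

lemma Ps_neg: "0 < u \<Longrightarrow> u \<le> d0 \<Longrightarrow> Ps u < 0"
  using Ps_le[of u] mult_pos_pos[OF k, of u] by linarith

lemma Ps_nonpos: "0 \<le> u \<Longrightarrow> u \<le> d0 \<Longrightarrow> Ps u \<le> 0"
  using Ps_le[of u] mult_nonneg_nonneg[of k u] k by linarith

lemma Ph_nonneg: "0 \<le> q \<Longrightarrow> 0 \<le> Ph q"
  using Ph_pos[of q] Ph_0 by (cases "q = 0") auto

lemma v_0: "0 \<le> l \<Longrightarrow> v 0 l = l"
  and v_nonneg: "0 \<le> l \<Longrightarrow> 0 \<le> t \<Longrightarrow> 0 \<le> v t l"
  and v_has_derivative:
    "0 \<le> l \<Longrightarrow> 0 \<le> t \<Longrightarrow> ((\<lambda>s. v s l) has_real_derivative - Ps (v t l)) (at t within {0..})"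
  using solves_v unfolding solves_v_def by auto

lemma continuous_on_v: "0 \<le> l \<Longrightarrow> continuous_on {0..} (\<lambda>s. v s l)"
  by (rule DERIV_continuous_on[OF v_has_derivative]) auto

lemma v_has_derivative_at: "0 \<le> l \<Longrightarrow> 0 < t \<Longrightarrow> ((\<lambda>s. v s l) has_real_derivative - Ps (v t l)) (at t)"
  using v_has_derivative[of l t] at_within_interior[of t "{0..}"] by auto

lemma v_le_if_Ps_nonpos:
  assumes l: "0 \<le> l" and s: "0 \<le> s" "s < T" and P: "\<And>\<xi>. s < \<xi> \<Longrightarrow> \<xi> < T \<Longrightarrow> Ps (v \<xi> l) \<le> 0"
  shows "v s l \<le> v T l"
proof -
  have "continuous_on {s..T} (\<lambda>r. v r l)"
    using continuous_on_v[OF l] by (rule continuous_on_subset) (use s in auto)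
  moreover have "(\<lambda>r. v r l) differentiable (at \<xi>)" if "s < \<xi>" "\<xi> < T" for \<xi>
    using v_has_derivative_at[OF l, of \<xi>] that s real_differentiable_def by force
  ultimately obtain D \<xi> where \<xi>: "s < \<xi>" "\<xi> < T" "DERIV (\<lambda>r. v r l) \<xi> :> D" "v T l - v s l = (T - s) * D"
    using MVT[OF s(2)] by blast
  have "D = - Ps (v \<xi> l)" using DERIV_unique[OF \<xi>(3) v_has_derivative_at[OF l, of \<xi>]] \<xi> s by auto
  then have "0 \<le> D" using P[OF \<xi>(1,2)] by simp
  then have "0 \<le> (T - s) * D" using s by simp
  then show ?thesis using \<xi>(4) by linarith
qed

lemma v_stays_above:
  assumes l: "0 \<le> l" and r: "0 \<le> r" "r \<le> T" and \<theta>: "\<theta> \<le> v r l"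
    and P: "\<And>u. 0 \<le> u \<Longrightarrow> u < \<theta> \<Longrightarrow> Ps u \<le> 0"
  shows "\<theta> \<le> v T l"
proof (rule ccontr)
  assume below: "\<not> \<theta> \<le> v T l"
  define S where "S = {r..T} \<inter> (\<lambda>r. v r l) -` {\<theta>..}"
  have "continuous_on {r..T} (\<lambda>r. v r l)"
    using continuous_on_v[OF l] by (rule continuous_on_subset) (use r in auto)
  then have "closed S" unfolding S_def by (intro continuous_closed_preimage) auto
  then have "compact S"
    unfolding S_def compact_eq_bounded_closed by (auto intro: bounded_subset[of "{r..T}"])
  moreover have "r \<in> S" using r \<theta> unfolding S_def by auto
  ultimately obtain s where s: "s \<in> S" "\<And>y. y \<in> S \<Longrightarrow> y \<le> s"
    using compact_attains_sup[of S] by blast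
  have "s \<noteq> T" using s(1) below unfolding S_def by auto
  then have sT: "s < T" "0 \<le> s" using s(1) r unfolding S_def by auto
  have "v s l \<le> v T l"
  proof (rule v_le_if_Ps_nonpos[OF l sT(2,1)])
    fix \<xi> assume \<xi>: "s < \<xi>" "\<xi> < T"
    then have "\<xi> \<notin> S" using s(2)[of \<xi>] by auto
    then have "v \<xi> l < \<theta>" using \<xi> s(1) unfolding S_def by auto
    then show "Ps (v \<xi> l) \<le> 0" using P v_nonneg[OF l, of \<xi>] \<xi> sT by auto
  qed
  then show False using s(1) below unfolding S_def by auto
qed

lemma v_ge_init: "0 \<le> a \<Longrightarrow> a \<le> d0 \<Longrightarrow> 0 \<le> r \<Longrightarrow> a \<le> v r a"
  using v_stays_above[of a 0 r a] v_0[of a] Ps_nonpos by auto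

lemma v_less_d0_before: "0 \<le> a \<Longrightarrow> v T a < d0 \<Longrightarrow> r \<in> {0..T} \<Longrightarrow> v r a < d0"
  using v_stays_above[of a r T d0] Ps_nonpos by fastforce

lemma v_mono_before:
  assumes "0 \<le> a" "v T a < d0" "r \<in> {0..T}"
  shows "v r a \<le> v T a"
proof (cases "r = T")
  case False
  show ?thesis
  proof (rule v_le_if_Ps_nonpos)
    fix \<xi> assume "r < \<xi>" "\<xi> < T"
    then show "Ps (v \<xi> a) \<le> 0"
      using v_less_d0_before[OF assms(1,2), of \<xi>] Ps_nonpos v_nonneg[of a \<xi>] assms by auto
  qed (use assms False in auto)
qed simp

lemma integrable_Ph_v: "0 \<le> l \<Longrightarrow> (\<lambda>r. Ph (v r l)) integrable_on {0..T}"
proof -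
  assume l: "0 \<le> l"
  have cont: "continuous_on {0..T} (\<lambda>r. v r l)"
    using continuous_on_v[OF l] by (rule continuous_on_subset) auto
  then obtain B where B: "\<forall>r\<in>{0..T}. \<bar>v r l\<bar> \<le> B"
    using compact_imp_bounded[OF compact_continuous_image[OF cont compact_Icc]]
    unfolding bounded_real by auto
  have "continuous_on {0..T} (\<lambda>r. Ph (v r l))"
  proof (rule continuous_on_compose2[OF continuous_Ph[of B] cont])
    show "(\<lambda>r. v r l) ` {0..T} \<subseteq> {0..B}" using B v_nonneg[OF l] by fastforce
  qed
  then show ?thesis by (rule integrable_continuous_real)
qed

text \<open>Substituting \<open>u = v r l\<close>, i.e. \<open>dr = du / \<bar>Ps u\<bar>\<close>, turns time integrals along the flow
  into integrals of these densities over the levels it passes.\<close>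
definition time_density :: "real \<Rightarrow> real" where
  "time_density u = 1 / - Ps u"

definition immigration_density :: "real \<Rightarrow> real" where
  "immigration_density u = Ph u / - Ps u"

lemma continuous_on_densities:
  assumes "0 < c"
  shows "continuous_on {c..d0} time_density" "continuous_on {c..d0} immigration_density"
proof -
  have "continuous_on {c..d0} Ps" using continuous_Ps by (rule continuous_on_subset) (use assms in auto)
  moreover have "continuous_on {c..d0} Ph" using continuous_Ph by (rule continuous_on_subset) (use assms in auto)
  moreover have "\<forall>u\<in>{c..d0}. - Ps u \<noteq> 0"
  proof
    fix u assume "u \<in> {c..d0}"
    then show "- Ps u \<noteq> 0" using Ps_neg[of u] assms by auto
  qed
  ultimately show "continuous_on {c..d0} time_density" "continuous_on {c..d0} immigration_density"
    unfolding time_density_def immigration_density_def by (auto intro!: continuous_intros)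
qed

lemma integrable_densities:
  assumes "0 < c" "y \<le> d0"
  shows "time_density integrable_on {c..y}" "immigration_density integrable_on {c..y}"
proof -
  have "{c..y} \<subseteq> {c..d0}" using assms by auto
  then show "time_density integrable_on {c..y}" "immigration_density integrable_on {c..y}"
    using continuous_on_densities[OF assms(1)] by (meson continuous_on_subset integrable_continuous_real)+
qed

lemma densities_nonneg:
  assumes "0 < u" "u \<le> d0"
  shows "0 \<le> time_density u" "0 \<le> immigration_density u"
  using Ps_neg[OF assms] Ph_nonneg[of u] assms
  unfolding time_density_def immigration_density_def by (auto simp: divide_nonneg_neg)

lemma has_integral_along_v:
  assumes l: "0 < l" "l \<le> d0" and T: "0 \<le> T" "v T l < d0" and f: "continuous_on {l..d0} f"
  shows "((\<lambda>r. f (v r l) * - Ps (v r l)) has_integral integral {l..v T l} f) {0..T}"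
proof -
  define F where "F y = integral {l..y} f" for y
  have "l \<le> v r l \<and> v r l \<le> d0" if "r \<in> {0..T}" for r
    using v_ge_init[of l r] v_less_d0_before[of l T r] l T that by auto
  then have path: "(\<lambda>r. v r l) ` {0..T} \<subseteq> {l..d0}" by auto
  have "((\<lambda>r. F (v r l)) has_vector_derivative f (v r l) * - Ps (v r l)) (at r within {0..T})"
    if r: "r \<in> {0..T}" for r
  proof -
    have "(F has_field_derivative f (v r l)) (at (v r l) within {l..d0})"
      unfolding F_def has_real_derivative_iff_has_vector_derivative
      by (rule integral_has_vector_derivative[OF f]) (use path r in blast)
    then have "(F has_field_derivative f (v r l)) (at (v r l) within (\<lambda>r. v r l) ` {0..T})"
      by (rule has_field_derivative_subset[OF _ path])
    moreover have "((\<lambda>r. v r l) has_field_derivative - Ps (v r l)) (at r within {0..T})"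
      using v_has_derivative[of l r] l r by (auto intro: has_field_derivative_subset)
    ultimately have "((\<lambda>r. F (v r l)) has_field_derivative f (v r l) * - Ps (v r l)) (at r within {0..T})"
      by (rule DERIV_image_chain[unfolded comp_def])
    then show ?thesis by (simp add: has_real_derivative_iff_has_vector_derivative)
  qed
  from fundamental_theorem_of_calculus[OF T(1) this]
  show ?thesis unfolding F_def using v_0[of l] l by simp
qed

lemma integral_Ph_v_eq:
  assumes "0 < l" "l \<le> d0" "0 \<le> T" "v T l < d0"
  shows "integral {0..T} (\<lambda>r. Ph (v r l)) = integral {l..v T l} immigration_density"
proof -
  have "((\<lambda>r. immigration_density (v r l) * - Ps (v r l)) has_integral integral {l..v T l} immigration_density) {0..T}"
    using has_integral_along_v[OF assms continuous_on_densities(2)] assms by simp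
  moreover have "immigration_density (v r l) * - Ps (v r l) = Ph (v r l)" if "r \<in> {0..T}" for r
    using Ps_neg[of "v r l"] v_ge_init[of l r] v_less_d0_before[of l T r] assms that
    unfolding immigration_density_def by force
  ultimately have "((\<lambda>r. Ph (v r l)) has_integral integral {l..v T l} immigration_density) {0..T}"
    by (subst has_integral_cong[where g = "\<lambda>r. immigration_density (v r l) * - Ps (v r l)"]) auto
  then show ?thesis by (rule integral_unique)
qed

lemma time_eq_integral_time_density:
  assumes "0 < l" "l \<le> d0" "0 \<le> T" "v T l < d0"
  shows "T = integral {l..v T l} time_density"
proof -
  have "((\<lambda>r. time_density (v r l) * - Ps (v r l)) has_integral integral {l..v T l} time_density) {0..T}"
    using has_integral_along_v[OF assms continuous_on_densities(1)] assms by simp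
  moreover have "time_density (v r l) * - Ps (v r l) = 1" if "r \<in> {0..T}" for r
    using Ps_neg[of "v r l"] v_ge_init[of l r] v_less_d0_before[of l T r] assms that
    unfolding time_density_def by force
  ultimately have "((\<lambda>r. 1) has_integral integral {l..v T l} time_density) {0..T}"
    by (subst has_integral_cong[where g = "\<lambda>r. time_density (v r l) * - Ps (v r l)"]) auto
  moreover have "((\<lambda>r. 1::real) has_integral T) {0..T}"
    using has_integral_const_real[of "1::real" 0 T] assms(3) by simp
  ultimately show ?thesis using has_integral_unique by blast
qed

lemma integral_immigration_density_le_integral_Ph_v:
  assumes a: "0 < a" "a \<le> \<epsilon>" "\<epsilon> < d0" and T: "0 \<le> T" "\<epsilon> \<le> v T a"
  shows "integral {a..\<epsilon>} immigration_density \<le> integral {0..T} (\<lambda>r. Ph (v r a))"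
proof -
  have "continuous_on {0..T} (\<lambda>r. v r a)"
    by (rule continuous_on_subset[OF continuous_on_v]) (use a in auto)
  then obtain r where r: "0 \<le> r" "r \<le> T" "v r a = \<epsilon>"
    using IVT'[of "\<lambda>r. v r a" 0 \<epsilon> T] v_0[of a] a T by auto
  then have "integral {a..\<epsilon>} immigration_density = integral {0..r} (\<lambda>r. Ph (v r a))"
    using integral_Ph_v_eq[of a r] a by simp
  also have "\<dots> \<le> integral {0..T} (\<lambda>r. Ph (v r a))"
    using r a integrable_Ph_v Ph_nonneg v_nonneg by (intro integral_subset_le) auto
  finally show ?thesis .
qed

lemma time_mult_Ph_le_integral_Ph_v:
  assumes "0 \<le> \<delta>" "\<delta> \<le> d0" "0 \<le> T"
  shows "T * Ph \<delta> \<le> integral {0..T} (\<lambda>r. Ph (v r \<delta>))"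
proof -
  have "integral {0..T} (\<lambda>r. Ph \<delta>) \<le> integral {0..T} (\<lambda>r. Ph (v r \<delta>))"
    using integrable_Ph_v assms v_ge_init Ph_mono by (intro integral_le) auto
  then show ?thesis using assms by (simp add: mult.commute)
qed

lemma integral_time_density_doubling_le:
  assumes "0 < a" "2 * a \<le> d0"
  shows "integral {a..2 * a} time_density \<le> 1 / k"
proof -
  have "integral {a..2 * a} time_density \<le> integral {a..2 * a} (\<lambda>u. 1 / (k * a))"
  proof (rule integral_le)
    show "time_density u \<le> 1 / (k * a)" if u: "u \<in> {a..2 * a}" for u
    proof -
      have "k * a \<le> k * u" using u k by (intro mult_left_mono) auto
      also have "\<dots> \<le> - Ps u" using Ps_le[of u] u assms by auto
      finally have "k * a \<le> - Ps u" .
      moreover have "0 < k * a" using k assms by simp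
      ultimately show ?thesis unfolding time_density_def by (intro frac_le) auto
    qed
  qed (use integrable_densities assms in auto)
  also have "\<dots> = 1 / k" using assms k by simp
  finally show ?thesis .
qed

lemma integral_densities_increment:
  assumes "0 < c" "c \<le> z" "z \<le> y" "y \<le> d0"
  defines "G \<equiv> \<lambda>y. integral {c..y} immigration_density"
    and "H \<equiv> \<lambda>y. integral {c..y} time_density"
  shows "G y - G z = integral {z..y} immigration_density" "H y - H z = integral {z..y} time_density"
    and "0 \<le> G y - G z" "0 \<le> H y - H z" "G y - G z \<le> Ph y * (H y - H z)"
proof -
  show G: "G y - G z = integral {z..y} immigration_density"
    and H: "H y - H z = integral {z..y} time_density"
    unfolding G_def H_def
    using Henstock_Kurzweil_Integration.integral_combine[OF assms(2,3) integrable_densities(2)[OF assms(1,4)]]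
      Henstock_Kurzweil_Integration.integral_combine[OF assms(2,3) integrable_densities(1)[OF assms(1,4)]]
    by simp_all
  have z: "0 < z" using assms by simp
  have "integral {z..y} immigration_density \<le> integral {z..y} (\<lambda>u. Ph y * time_density u)"
  proof (rule integral_le)
    show "immigration_density u \<le> Ph y * time_density u" if "u \<in> {z..y}" for u
    proof -
      have "Ph u / - Ps u \<le> Ph y / - Ps u"
        using that z assms Ph_mono[of u y] Ps_neg[of u] by (intro divide_right_mono) auto
      then show ?thesis unfolding immigration_density_def time_density_def by simp
    qed
  qed (use integrable_densities z assms in \<open>auto intro: integrable_on_mult_right\<close>)
  then show "G y - G z \<le> Ph y * (H y - H z)" unfolding G H by simp
  show "0 \<le> G y - G z" "0 \<le> H y - H z"
    unfolding G H using densities_nonneg z assms by (auto intro!: integral_nonneg integrable_densities)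
qed

lemma integral_Ph_v_doubling_diff_le:
  assumes a: "0 < a" "2 * a \<le> d0" and T: "0 \<le> T" "v T a < d0" "v T (2 * a) < d0"
  shows "\<bar>integral {0..T} (\<lambda>r. Ph (v r (2 * a))) - integral {0..T} (\<lambda>r. Ph (v r a))\<bar>
           \<le> (Ph (max (v T a) (v T (2 * a))) + Ph (2 * a)) / k"
proof -
  define G where "G y = integral {a..y} immigration_density" for y
  define H where "H y = integral {a..y} time_density" for y
  define y1 y2 where "y1 = v T a" and "y2 = v T (2 * a)"
  have y: "a \<le> y1" "y1 < d0" "2 * a \<le> y2" "y2 < d0"
    using v_ge_init[of a T] v_ge_init[of "2 * a" T] a T unfolding y1_def y2_def by auto
  note increment = integral_densities_increment[OF a(1), folded G_def H_def]
  have I1: "integral {0..T} (\<lambda>r. Ph (v r a)) = G y1" and T1: "T = H y1"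
    using integral_Ph_v_eq[of a T] time_eq_integral_time_density[of a T] a T
    unfolding G_def H_def y1_def by auto
  have "integral {0..T} (\<lambda>r. Ph (v r (2 * a))) = integral {2 * a..y2} immigration_density"
    and "T = integral {2 * a..y2} time_density"
    using integral_Ph_v_eq[of "2 * a" T] time_eq_integral_time_density[of "2 * a" T] a T
    unfolding y2_def by auto
  then have I2: "integral {0..T} (\<lambda>r. Ph (v r (2 * a))) = G y2 - G (2 * a)"
    and T2: "T = H y2 - H (2 * a)"
    using increment(1,2)[of "2 * a" y2] a y by auto
  have key: "\<bar>G y2 - G y1\<bar> \<le> Ph (max y1 y2) * \<bar>H y2 - H y1\<bar>"
  proof (cases "y1 \<le> y2")
    case True
    then show ?thesis using increment(3-5)[of y1 y2] y a by (simp add: max_def)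
  next
    case False
    then show ?thesis using increment(3-5)[of y2 y1] y a by (simp add: max_def abs_minus_commute)
  qed
  have H2: "H y2 - H y1 = H (2 * a)" "H (2 * a) \<le> 1 / k"
    using T1 T2 integral_time_density_doubling_le[OF a] unfolding H_def by auto
  have G2: "0 \<le> G (2 * a)" "G (2 * a) \<le> Ph (2 * a) * H (2 * a)" "0 \<le> H (2 * a)"
    using increment(3-5)[of a "2 * a"] a unfolding G_def H_def by auto
  have Ph: "0 \<le> Ph (max y1 y2)" "0 \<le> Ph (2 * a)" using Ph_nonneg y a by auto
  have "\<bar>(G y2 - G (2 * a)) - G y1\<bar> \<le> \<bar>G y2 - G y1\<bar> + G (2 * a)" using G2 by linarith
  also have "\<dots> \<le> (Ph (max y1 y2) + Ph (2 * a)) * H (2 * a)"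
    using key H2 G2 by (simp add: algebra_simps)
  also have "\<dots> \<le> (Ph (max y1 y2) + Ph (2 * a)) * (1 / k)" using H2 Ph by (intro mult_left_mono) auto
  finally show ?thesis using I1 I2 unfolding y1_def y2_def by simp
qed

definition laplace_exponent :: "real \<Rightarrow> real \<Rightarrow> real \<Rightarrow> real" where
  "laplace_exponent x t l = x * v t l + integral {0..t} (\<lambda>r. Ph (v r l))"

lemma integral_Ph_v_le_laplace_exponent:
  "0 \<le> x \<Longrightarrow> 0 \<le> l \<Longrightarrow> 0 \<le> t \<Longrightarrow> integral {0..t} (\<lambda>r. Ph (v r l)) \<le> laplace_exponent x t l"
  unfolding laplace_exponent_def using v_nonneg[of l t] by simp

lemma tendsto_0_if_laplace_exponent_bounded:
  fixes a :: "nat \<Rightarrow> real"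
  assumes x: "0 \<le> x" and a: "\<And>n. 0 \<le> a n"
    and K: "\<forall>\<^sub>F n in sequentially. laplace_exponent x n (a n) \<le> K"
    and mono: "\<And>n p q. 0 \<le> p \<Longrightarrow> p \<le> q \<Longrightarrow> laplace_exponent x (real n) p \<le> laplace_exponent x (real n) q"
  shows "a \<longlonglongrightarrow> 0"
proof (rule ccontr)
  assume "\<not> a \<longlonglongrightarrow> 0"
  then obtain e where e: "0 < e" "\<And>N. \<exists>n\<ge>N. e \<le> a n"
    using a unfolding LIMSEQ_iff by (auto simp: not_less)
  define \<delta> where "\<delta> = min e d0"
  have \<delta>: "0 < \<delta>" "\<delta> \<le> d0" "\<delta> \<le> e" using e d0 unfolding \<delta>_def by auto
  obtain N1 where N1: "\<And>n. N1 \<le> n \<Longrightarrow> laplace_exponent x n (a n) \<le> K"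
    using K unfolding eventually_sequentially by auto
  obtain N2 :: nat where N2: "K < N2 * Ph \<delta>" using ex_less_of_nat_mult[OF Ph_pos[OF \<delta>(1)]] by auto
  obtain n where n: "max N1 N2 \<le> n" "e \<le> a n" using e(2) by blast
  have "N2 * Ph \<delta> \<le> n * Ph \<delta>" using n Ph_pos[OF \<delta>(1)] by (intro mult_right_mono) auto
  also have "\<dots> \<le> integral {0..n} (\<lambda>r. Ph (v r \<delta>))" using time_mult_Ph_le_integral_Ph_v \<delta> by simp
  also have "\<dots> \<le> laplace_exponent x n \<delta>" using integral_Ph_v_le_laplace_exponent x \<delta> by simp
  also have "\<dots> \<le> laplace_exponent x n (a n)" using mono \<delta> n by simp
  also have "\<dots> \<le> K" using N1 n by simp
  finally show False using N2 by simp
qed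

lemma v_tendsto_0_if_laplace_exponent_bounded:
  fixes a :: "nat \<Rightarrow> real"
  assumes x: "0 \<le> x" and a: "\<And>n. 0 < a n" "a \<longlonglongrightarrow> 0"
    and K: "\<forall>\<^sub>F n in sequentially. laplace_exponent x n (a n) \<le> K"
    and diverges: "\<And>\<epsilon>. 0 < \<epsilon> \<Longrightarrow> (\<integral>\<^sup>+ u\<in>{0<..\<epsilon>}. ennreal (Ph u / \<bar>Ps u\<bar>) \<partial>lborel) = \<infinity>"
  shows "(\<lambda>n. v n (a n)) \<longlonglongrightarrow> 0"
proof (rule ccontr)
  assume "\<not> (\<lambda>n. v n (a n)) \<longlonglongrightarrow> 0"
  then obtain e where e: "0 < e" "\<And>N. \<exists>n\<ge>N. e \<le> v n (a n)"
    using v_nonneg a(1) unfolding LIMSEQ_iff by (auto simp: not_less less_imp_le)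
  define \<epsilon> where "\<epsilon> = min e (d0 / 2)"
  have \<epsilon>: "0 < \<epsilon>" "\<epsilon> < d0" "\<epsilon> \<le> e" using e d0 unfolding \<epsilon>_def by auto
  text \<open>Since \<open>a n \<rightarrow> 0\<close> while the flow started at \<open>a n\<close> keeps reaching level \<open>\<epsilon>\<close>,
    the immigration density has bounded integrals over \<open>[h, \<epsilon>]\<close> for every \<open>h > 0\<close>.\<close>
  have "integral {h..\<epsilon>} immigration_density \<le> K" if h: "0 < h" "h \<le> \<epsilon>" for h
  proof -
    obtain N1 where N1: "\<And>n. N1 \<le> n \<Longrightarrow> laplace_exponent x n (a n) \<le> K"
      using K unfolding eventually_sequentially by auto
    obtain N2 where N2: "\<And>n. N2 \<le> n \<Longrightarrow> a n < h"
      using a(1) order_tendstoD(2)[OF a(2) h(1)] unfolding eventually_sequentially by auto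
    obtain n where n: "max N1 N2 \<le> n" "e \<le> v n (a n)" using e(2) by blast
    have an: "0 < a n" "a n < h" using N2[of n] n a(1) by auto
    have "integral {h..\<epsilon>} immigration_density \<le> integral {a n..\<epsilon>} immigration_density"
      using an h \<epsilon> densities_nonneg integrable_densities by (intro integral_subset_le) auto
    also have "\<dots> \<le> integral {0..n} (\<lambda>r. Ph (v r (a n)))"
      using an h \<epsilon> n by (intro integral_immigration_density_le_integral_Ph_v) auto
    also have "\<dots> \<le> laplace_exponent x n (a n)"
      using integral_Ph_v_le_laplace_exponent x an by simp
    also have "\<dots> \<le> K" using N1 n by simp
    finally show ?thesis .
  qed
  then have "(\<integral>\<^sup>+ u\<in>{0<..\<epsilon>}. ennreal (immigration_density u) \<partial>lborel) \<le> ennreal K"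
  proof (intro nn_integral_Ioc_le_if_integrals_le)
    show "continuous_on {h..\<epsilon>} immigration_density" if "0 < h" for h
      using continuous_on_densities(2)[OF that] by (rule continuous_on_subset) (use \<epsilon> in auto)
  qed (use \<epsilon> densities_nonneg in auto)
  moreover have "(\<integral>\<^sup>+ u\<in>{0<..\<epsilon>}. ennreal (immigration_density u) \<partial>lborel)
      = (\<integral>\<^sup>+ u\<in>{0<..\<epsilon>}. ennreal (Ph u / \<bar>Ps u\<bar>) \<partial>lborel)"
    using Ps_neg \<epsilon> unfolding immigration_density_def
    by (intro nn_integral_cong) (auto split: split_indicator simp: abs_of_neg)
  ultimately show False using diverges[OF \<epsilon>(1)] by (simp add: top_unique)
qed

lemma laplace_exponent_doubling_diff_tendsto_0:
  fixes a :: "nat \<Rightarrow> real"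
  assumes x: "0 \<le> x" and a: "\<And>n. 0 < a n" "a \<longlonglongrightarrow> 0"
    and v1: "(\<lambda>n. v n (a n)) \<longlonglongrightarrow> 0" and v2: "(\<lambda>n. v n (2 * a n)) \<longlonglongrightarrow> 0"
  shows "(\<lambda>n. laplace_exponent x n (2 * a n) - laplace_exponent x n (a n)) \<longlonglongrightarrow> 0"
proof (rule Lim_null_comparison)
  define B where "B n = x * (\<bar>v n (2 * a n)\<bar> + \<bar>v n (a n)\<bar>)
     + (Ph (max (v n (a n)) (v n (2 * a n))) + Ph (2 * a n)) / k" for n
  have a2: "(\<lambda>n. 2 * a n) \<longlonglongrightarrow> 0" using tendsto_mult_right_zero[OF a(2)] by simp
  have "\<forall>\<^sub>F n in sequentially. 2 * a n < d0" "\<forall>\<^sub>F n in sequentially. v n (a n) < d0"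
    "\<forall>\<^sub>F n in sequentially. v n (2 * a n) < d0"
    using order_tendstoD(2)[OF a2 d0] order_tendstoD(2)[OF v1 d0] order_tendstoD(2)[OF v2 d0]
    by simp_all
  then show "\<forall>\<^sub>F n in sequentially.
      norm (laplace_exponent x n (2 * a n) - laplace_exponent x n (a n)) \<le> B n"
  proof eventually_elim
    case (elim n)
    have "\<bar>x * v n (2 * a n) - x * v n (a n)\<bar> \<le> x * (\<bar>v n (2 * a n)\<bar> + \<bar>v n (a n)\<bar>)"
      using x by (simp add: abs_mult right_diff_distrib[symmetric] abs_triangle_ineq4 mult_left_mono)
    then show ?case
      using integral_Ph_v_doubling_diff_le[OF a(1)[of n] _ _ elim(2,3)] elim(1)
      unfolding laplace_exponent_def B_def by simp
  qed
  have Ph_tendsto: "(\<lambda>n. Ph (s n)) \<longlonglongrightarrow> 0" if "s \<longlonglongrightarrow> 0" "\<And>n. 0 \<le> s n" for s :: "nat \<Rightarrow> real"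
  proof -
    have "\<forall>\<^sub>F n in sequentially. s n \<in> {0..1}"
      using order_tendstoD(2)[OF that(1), of 1] that(2) by (auto elim: eventually_mono)
    then show ?thesis using continuous_on_tendsto_compose[OF continuous_Ph[of 1] that(1)] Ph_0 by simp
  qed
  have "(\<lambda>n. Ph (max (v n (a n)) (v n (2 * a n)))) \<longlonglongrightarrow> 0" "(\<lambda>n. Ph (2 * a n)) \<longlonglongrightarrow> 0"
    using tendsto_max[OF v1 v2] a2 v_nonneg a(1) by (auto intro!: Ph_tendsto simp: less_imp_le le_max_iff_disj)
  then have "B \<longlonglongrightarrow> x * (\<bar>0\<bar> + \<bar>0\<bar>) + (0 + 0) / k"
    unfolding B_def using k by (intro tendsto_intros v1 v2) auto
  then show "B \<longlonglongrightarrow> 0" by simp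
qed

lemma v_tendsto_0_earlier:
  fixes a :: "nat \<Rightarrow> real"
  assumes a: "\<And>n. 0 \<le> a n" and v: "(\<lambda>n. v n (a n)) \<longlonglongrightarrow> 0"
  shows "(\<lambda>n. v (n - m) (a n)) \<longlonglongrightarrow> 0"
proof (rule real_tendsto_sandwich[where f="\<lambda>_. 0" and h="\<lambda>n. v n (a n)"])
  show "\<forall>\<^sub>F n in sequentially. v (n - m) (a n) \<le> v n (a n)"
    using order_tendstoD(2)[OF v d0] by eventually_elim (use a in \<open>auto intro!: v_mono_before\<close>)
qed (use v a v_nonneg in auto)

end

section \<open>The Markov property\<close>

lemma space_natural_filtration [simp]: "space (natural_filtration M Y s) = space M"
  unfolding natural_filtration_def by (simp add: space_measure_of_conv)

lemma sets_natural_filtration: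
  "sets (natural_filtration M Y s)
     = sigma_sets (space M) {Y r -` A \<inter> space M | r A. r \<in> {0..s} \<and> A \<in> sets borel}"
  unfolding natural_filtration_def by (rule sets_measure_of) auto

lemma subalgebra_natural_filtration:
  assumes "\<And>t. 0 \<le> t \<Longrightarrow> Y t \<in> borel_measurable M"
  shows "subalgebra M (natural_filtration M Y s)"
  unfolding subalgebra_def space_natural_filtration sets_natural_filtration
  using assms by (auto intro!: sets.sigma_sets_subset measurable_sets)

lemma sets_natural_filtration_mono:
  "s \<le> t \<Longrightarrow> sets (natural_filtration M Y s) \<subseteq> sets (natural_filtration M Y t)"
  unfolding sets_natural_filtration by (rule sigma_sets_mono') (auto, metis order_trans)

lemma measurable_natural_filtration: "0 \<le> s \<Longrightarrow> Y s \<in> borel_measurable (natural_filtration M Y s)"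
  by (rule measurableI) (auto simp: sets_natural_filtration intro!: sigma_sets.Basic)

lemma Int_stable_natural_filtrations: "Int_stable (\<Union>m::nat. sets (natural_filtration M Y m))"
proof (rule Int_stableI)
  fix A B assume "A \<in> (\<Union>m::nat. sets (natural_filtration M Y m))" "B \<in> (\<Union>m::nat. sets (natural_filtration M Y m))"
  then obtain m1 m2 :: nat
    where "A \<in> sets (natural_filtration M Y m1)" "B \<in> sets (natural_filtration M Y m2)"
    by auto
  then have "A \<inter> B \<in> sets (natural_filtration M Y (max m1 m2))"
    using sets_natural_filtration_mono[of "real m1" "real (max m1 m2)" M Y]
      sets_natural_filtration_mono[of "real m2" "real (max m1 m2)" M Y] by auto
  then show "A \<inter> B \<in> (\<Union>m::nat. sets (natural_filtration M Y m))" by blast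
qed

lemma measurable_sigma_natural_filtrations:
  fixes n :: nat
  shows "Y n \<in> borel_measurable (sigma (space M) (\<Union>m::nat. sets (natural_filtration M Y m)))"
proof -
  let ?P = "\<Union>m::nat. sets (natural_filtration M Y m)"
  have "?P \<subseteq> Pow (space M)"
    using sets.sets_into_space[of _ "natural_filtration M Y _"] by auto
  then have space: "space (sigma (space M) ?P) = space M" and sets: "sets (sigma (space M) ?P) = sigma_sets (space M) ?P"
    by (auto simp: space_measure_of_conv intro!: sets_measure_of)
  show ?thesis
  proof (rule measurableI)
    fix B :: "real set" assume "B \<in> sets borel"
    then have "Y n -` B \<inter> space M \<in> sets (natural_filtration M Y (real n))"
      using measurable_sets[OF measurable_natural_filtration[of "real n" Y M]] by simp
    then show "Y n -` B \<inter> space (sigma (space M) ?P) \<in> sets (sigma (space M) ?P)"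
      unfolding space sets by blast
  qed (simp add: space)
qed

lemma CBI_D:
  assumes "CBI M Ph v x Y"
  shows "prob_space M" "\<And>t. 0 \<le> t \<Longrightarrow> Y t \<in> borel_measurable M"
    "\<And>t \<omega>. 0 \<le> t \<Longrightarrow> \<omega> \<in> space M \<Longrightarrow> 0 \<le> Y t \<omega>" "AE \<omega> in M. Y 0 \<omega> = x"
    "\<And>s t l. 0 \<le> s \<Longrightarrow> 0 \<le> t \<Longrightarrow> 0 \<le> l \<Longrightarrow> AE \<omega> in M.
        real_cond_exp M (natural_filtration M Y s) (\<lambda>\<omega>. exp (- l * Y (s + t) \<omega>)) \<omega>
          = exp (- Y s \<omega> * v t l - integral {0..t} (\<lambda>r. Ph (v r l)))"
  using assms unfolding CBI_def by auto

lemma CBI_set_integral_exp: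
  assumes C: "CBI M Ph v x Y" and s: "0 \<le> s" and t: "0 \<le> t" and l: "0 \<le> l"
    and A: "A \<in> sets (natural_filtration M Y s)"
  shows "(\<integral>\<omega>\<in>A. exp (- l * Y (s + t) \<omega>) \<partial>M)
       = exp (- integral {0..t} (\<lambda>r. Ph (v r l))) * (\<integral>\<omega>\<in>A. exp (- Y s \<omega> * v t l) \<partial>M)"
proof -
  interpret prob_space M using CBI_D(1)[OF C] .
  let ?F = "natural_filtration M Y s"
  have sub: "subalgebra M ?F" by (rule subalgebra_natural_filtration[OF CBI_D(2)[OF C]])
  interpret sigma_finite_subalgebra M ?F
    by (rule finite_measure_subalgebra_is_sigma_finite)
       (simp add: finite_measure_subalgebra_def finite_measure_subalgebra_axioms_def sub finite_measure_axioms)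
  have [measurable]: "Y (s + t) \<in> borel_measurable M" "Y s \<in> borel_measurable M"
    using CBI_D(2)[OF C] s t by auto
  have AM: "A \<in> sets M" using sub A unfolding subalgebra_def by auto
  have "integrable M (\<lambda>\<omega>. exp (- l * Y (s + t) \<omega>))"
    using CBI_D(3)[OF C] s t l by (intro integrable_const_bound[where B=1]) (auto simp: mult_nonneg_nonneg)
  then have "(\<integral>\<omega>\<in>A. exp (- l * Y (s + t) \<omega>) \<partial>M)
      = (\<integral>\<omega>\<in>A. real_cond_exp M ?F (\<lambda>\<omega>. exp (- l * Y (s + t) \<omega>)) \<omega> \<partial>M)"
    by (rule real_cond_exp_intA[OF _ A])
  also have "\<dots> = (\<integral>\<omega>\<in>A. exp (- Y s \<omega> * v t l - integral {0..t} (\<lambda>r. Ph (v r l))) \<partial>M)"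
    using CBI_D(5)[OF C s t l] AM by (intro set_lebesgue_integral_cong_AE) auto
  also have "\<dots> = (\<integral>\<omega>\<in>A. exp (- integral {0..t} (\<lambda>r. Ph (v r l))) * exp (- Y s \<omega> * v t l) \<partial>M)"
    by (simp add: exp_diff exp_minus field_simps)
  also have "\<dots> = exp (- integral {0..t} (\<lambda>r. Ph (v r l))) * (\<integral>\<omega>\<in>A. exp (- Y s \<omega> * v t l) \<partial>M)"
    by simp
  finally show ?thesis .
qed

locale supercritical_CBI = supercritical_flow +
  fixes M :: "'a measure" and Y :: "real \<Rightarrow> 'a \<Rightarrow> real" and x :: real
  assumes CBI: "CBI M Ph v x Y" and x: "0 \<le> x"
begin

sublocale prob_space M using CBI_D(1)[OF CBI] .

lemma measurable_Y [measurable]: "0 \<le> t \<Longrightarrow> Y t \<in> borel_measurable M"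
  and Y_nonneg: "0 \<le> t \<Longrightarrow> \<omega> \<in> space M \<Longrightarrow> 0 \<le> Y t \<omega>"
  using CBI_D(2,3)[OF CBI] by auto

lemma integrable_exp_Y: "0 \<le> l \<Longrightarrow> 0 \<le> t \<Longrightarrow> integrable M (\<lambda>\<omega>. exp (- l * Y t \<omega>))"
  using Y_nonneg by (intro integrable_const_bound[where B=1]) (auto simp: mult_nonneg_nonneg)

lemma expectation_exp_Y:
  assumes "0 \<le> l" "0 \<le> t"
  shows "expectation (\<lambda>\<omega>. exp (- l * Y t \<omega>)) = exp (- laplace_exponent x t l)"
proof -
  have "expectation (\<lambda>\<omega>. exp (- l * Y (0 + t) \<omega>))
      = exp (- integral {0..t} (\<lambda>r. Ph (v r l))) * (\<integral>\<omega>\<in>space M. exp (- Y 0 \<omega> * v t l) \<partial>M)"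
    using CBI_set_integral_exp[OF CBI order_refl assms(2,1) sets.top] integrable_exp_Y assms
    by (simp add: set_integral_space)
  also have "(\<integral>\<omega>\<in>space M. exp (- Y 0 \<omega> * v t l) \<partial>M) = exp (- x * v t l)"
  proof -
    have "(\<integral>\<omega>\<in>space M. exp (- Y 0 \<omega> * v t l) \<partial>M) = expectation (\<lambda>\<omega>. exp (- x * v t l))"
      unfolding set_lebesgue_integral_def
      using CBI_D(4)[OF CBI] by (intro integral_cong_AE) auto
    then show ?thesis by (simp add: prob_space)
  qed
  finally show ?thesis unfolding laplace_exponent_def by (simp add: exp_add[symmetric] algebra_simps)
qed

lemma laplace_exponent_mono:
  assumes "0 \<le> p" "p \<le> q" "0 \<le> t"
  shows "laplace_exponent x t p \<le> laplace_exponent x t q"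
proof -
  have "expectation (\<lambda>\<omega>. exp (- q * Y t \<omega>)) \<le> expectation (\<lambda>\<omega>. exp (- p * Y t \<omega>))"
    using assms integrable_exp_Y Y_nonneg by (intro integral_mono) (auto intro: mult_right_mono)
  then show ?thesis using expectation_exp_Y assms by simp
qed

lemma set_integral_exp_Y_tendsto_prob:
  assumes c: "\<And>n. 0 \<le> c n" "c \<longlonglongrightarrow> 0" and "0 \<le> s" "A \<in> sets M"
  shows "(\<lambda>n. \<integral>\<omega>\<in>A. exp (- Y s \<omega> * c n) \<partial>M) \<longlonglongrightarrow> prob A"
proof -
  have "(\<lambda>n. \<integral>\<omega>\<in>A. exp (- Y s \<omega> * c n) \<partial>M) \<longlonglongrightarrow> (\<integral>\<omega>\<in>A. exp (- Y s \<omega> * 0) \<partial>M)"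
    unfolding set_lebesgue_integral_def
  proof (rule integral_dominated_convergence[where w="\<lambda>_. 1"])
    show "AE \<omega> in M. (\<lambda>n. indicator A \<omega> *\<^sub>R exp (- Y s \<omega> * c n)) \<longlonglongrightarrow> indicator A \<omega> *\<^sub>R exp (- Y s \<omega> * 0)"
      by (intro AE_I2 tendsto_intros c(2))
    show "AE \<omega> in M. norm (indicator A \<omega> *\<^sub>R exp (- Y s \<omega> * c n)) \<le> 1" for n
      using Y_nonneg c(1)[of n] assms(3)
      by (auto intro!: AE_I2 split: split_indicator simp: mult_nonneg_nonneg)
  qed (use assms in auto)
  then show ?thesis using assms(4) by (simp add: set_integral_const)
qed

end

section \<open>The scaled limit\<close>

locale scaled_supercritical_CBI = supercritical_CBI +
  fixes \<eta> :: "real \<Rightarrow> real"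
  assumes \<eta>_pos: "\<And>t. 0 \<le> t \<Longrightarrow> 0 < \<eta> t"
    and converges: "AE \<omega> in M. \<exists>L::ereal. ((\<lambda>t. ereal (\<eta> t * Y t \<omega>)) \<longlongrightarrow> L) at_top"
    and diverges: "\<And>\<epsilon>. 0 < \<epsilon> \<Longrightarrow> (\<integral>\<^sup>+ u\<in>{0<..\<epsilon>}. ennreal (Ph u / \<bar>Ps u\<bar>) \<partial>lborel) = \<infinity>"
begin

definition scaled_limit :: "'a \<Rightarrow> ereal" where
  "scaled_limit \<omega> = Lim at_top (\<lambda>t. ereal (\<eta> t * Y t \<omega>))"

definition laplace_sample :: "real \<Rightarrow> nat \<Rightarrow> 'a \<Rightarrow> real" where
  "laplace_sample l n \<omega> = exp (- (l * \<eta> n) * Y n \<omega>)"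

definition laplace_limit :: "real \<Rightarrow> 'a \<Rightarrow> real" where
  "laplace_limit l \<omega> = lim (\<lambda>n. laplace_sample l n \<omega>)"

lemma AE_tendsto_scaled_limit:
  "AE \<omega> in M. ((\<lambda>t. ereal (\<eta> t * Y t \<omega>)) \<longlongrightarrow> scaled_limit \<omega>) at_top \<and> 0 \<le> scaled_limit \<omega>"
  using converges AE_space
proof eventually_elim
  case (elim \<omega>)
  then have lim: "((\<lambda>t. ereal (\<eta> t * Y t \<omega>)) \<longlongrightarrow> scaled_limit \<omega>) at_top"
    unfolding scaled_limit_def using tendsto_Lim by force
  have "\<forall>\<^sub>F t in at_top. 0 \<le> ereal (\<eta> t * Y t \<omega>)"
    using eventually_ge_at_top[of "0::real"]
  proof eventually_elim
    case (elim t)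
    then show ?case using \<eta>_pos[of t] Y_nonneg[of t \<omega>] \<open>\<omega> \<in> space M\<close> by simp
  qed
  then show ?case using lim tendsto_lowerbound[OF lim] by simp
qed

lemma measurable_laplace_sample [measurable]: "laplace_sample l n \<in> borel_measurable M"
  unfolding laplace_sample_def by measurable

lemma measurable_laplace_limit [measurable]: "laplace_limit l \<in> borel_measurable M"
  unfolding laplace_limit_def by measurable

lemma laplace_sample_bounds: "0 \<le> l \<Longrightarrow> \<omega> \<in> space M \<Longrightarrow> 0 \<le> laplace_sample l n \<omega> \<and> laplace_sample l n \<omega> \<le> 1"
  unfolding laplace_sample_def using \<eta>_pos[of n] Y_nonneg[of n \<omega>] by (auto simp: mult_nonneg_nonneg)

lemma expectation_laplace_sample:
  "0 \<le> l \<Longrightarrow> expectation (laplace_sample l n) = exp (- laplace_exponent x n (l * \<eta> n))"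
  unfolding laplace_sample_def using expectation_exp_Y[of "l * \<eta> n" n] \<eta>_pos[of n] by simp

lemma laplace_sample_tendsto:
  assumes l: "0 < l"
  shows "AE \<omega> in M. (\<lambda>n. laplace_sample l n \<omega>) \<longlonglongrightarrow> laplace_limit l \<omega> \<and>
    laplace_limit l \<omega> = (if scaled_limit \<omega> = \<infinity> then 0 else exp (- l * real_of_ereal (scaled_limit \<omega>)))"
  using AE_tendsto_scaled_limit
proof eventually_elim
  case (elim \<omega>)
  have seq: "(\<lambda>n. ereal (\<eta> n * Y n \<omega>)) \<longlonglongrightarrow> scaled_limit \<omega>"
    using filterlim_compose[OF conjunct1[OF elim] filterlim_real_sequentially] by simp
  have "(\<lambda>n. laplace_sample l n \<omega>)
      \<longlonglongrightarrow> (if scaled_limit \<omega> = \<infinity> then 0 else exp (- l * real_of_ereal (scaled_limit \<omega>)))"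
    (is "_ \<longlonglongrightarrow> ?E")
  proof (cases "scaled_limit \<omega>")
    case (real w)
    then have "(\<lambda>n. \<eta> n * Y n \<omega>) \<longlonglongrightarrow> w" using seq by simp
    then have "(\<lambda>n. exp (- l * (\<eta> n * Y n \<omega>))) \<longlonglongrightarrow> exp (- l * w)" by (intro tendsto_intros)
    then show ?thesis unfolding laplace_sample_def using real by (simp add: mult.assoc)
  next
    case PInf
    then have "filterlim (\<lambda>n. \<eta> n * Y n \<omega>) at_top sequentially"
      using seq tendsto_PInfty_eq_at_top by auto
    then have "filterlim (\<lambda>n. l * (\<eta> n * Y n \<omega>)) at_top sequentially"
      by (rule filterlim_tendsto_pos_mult_at_top[OF tendsto_const l])
    then have "(\<lambda>n. exp (- (l * (\<eta> n * Y n \<omega>)))) \<longlonglongrightarrow> 0"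
      by (intro filterlim_compose[OF exp_at_bot] filterlim_compose[OF filterlim_uminus_at_bot_at_top])
    then show ?thesis unfolding laplace_sample_def using PInf by (simp add: mult.assoc)
  next
    case MInf
    then show ?thesis using elim by simp
  qed
  moreover from this have "laplace_limit l \<omega> = ?E" unfolding laplace_limit_def by (rule limI)
  ultimately show ?case by simp
qed

lemma laplace_limit_bounds:
  assumes "0 < l"
  shows "AE \<omega> in M. 0 \<le> laplace_limit l \<omega> \<and> laplace_limit l \<omega> \<le> 1"
  using laplace_sample_tendsto[OF assms] AE_space
proof eventually_elim
  case (elim \<omega>)
  note lim = conjunct1[OF elim(1)]
  show ?case
    using LIMSEQ_le_const[OF lim] LIMSEQ_le_const2[OF lim] laplace_sample_bounds[of l \<omega>] assms elim(2)
    by auto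
qed

lemma integrable_laplace_sample: "0 \<le> l \<Longrightarrow> integrable M (laplace_sample l n)"
  using laplace_sample_bounds by (intro integrable_const_bound[where B=1]) auto

lemma integrable_laplace_limit: "0 < l \<Longrightarrow> integrable M (laplace_limit l)"
proof (rule integrable_const_bound[where B=1])
  show "AE \<omega> in M. norm (laplace_limit l \<omega>) \<le> 1" if "0 < l"
    using laplace_limit_bounds[OF that] by eventually_elim auto
qed simp

lemma set_integral_laplace_sample_tendsto:
  assumes "0 < l" "A \<in> sets M"
  shows "(\<lambda>n. \<integral>\<omega>\<in>A. laplace_sample l n \<omega> \<partial>M) \<longlonglongrightarrow> (\<integral>\<omega>\<in>A. laplace_limit l \<omega> \<partial>M)"
  unfolding set_lebesgue_integral_def
proof (rule integral_dominated_convergence[where w="\<lambda>_. 1"])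
  show "AE \<omega> in M. (\<lambda>n. indicator A \<omega> *\<^sub>R laplace_sample l n \<omega>) \<longlonglongrightarrow> indicator A \<omega> *\<^sub>R laplace_limit l \<omega>"
    using laplace_sample_tendsto[OF assms(1)] by eventually_elim (rule tendsto_scaleR[OF tendsto_const], blast)
  show "AE \<omega> in M. norm (indicator A \<omega> *\<^sub>R laplace_sample l n \<omega>) \<le> 1" for n
    using laplace_sample_bounds[of l _ n] assms(1) by (auto intro!: AE_I2 split: split_indicator)
qed (use assms in auto)

lemma expectation_laplace_sample_tendsto:
  "0 < l \<Longrightarrow> (\<lambda>n. expectation (laplace_sample l n)) \<longlonglongrightarrow> expectation (laplace_limit l)"
  using set_integral_laplace_sample_tendsto[OF _ sets.top] integrable_laplace_limit
    integrable_laplace_sample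
  by (simp add: set_integral_space)

lemma laplace_exponent_tendsto_if_expectation_pos:
  assumes l: "0 < l" and q: "0 < expectation (laplace_limit l)"
  shows "(\<lambda>n. l * \<eta> n) \<longlonglongrightarrow> 0" "(\<lambda>n. v n (l * \<eta> n)) \<longlonglongrightarrow> 0"
    "(\<lambda>n. laplace_exponent x n (l * \<eta> n)) \<longlonglongrightarrow> - ln (expectation (laplace_limit l))"
proof -
  define a where "a n = l * \<eta> n" for n :: nat
  have a: "0 < a n" for n unfolding a_def using l \<eta>_pos by simp
  have "(\<lambda>n. exp (- laplace_exponent x n (a n))) \<longlonglongrightarrow> expectation (laplace_limit l)"
    using expectation_laplace_sample_tendsto[OF l] expectation_laplace_sample l
    unfolding a_def by simp
  from tendsto_ln[OF this] q
  have lim: "(\<lambda>n. laplace_exponent x n (a n)) \<longlonglongrightarrow> - ln (expectation (laplace_limit l))"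
    using tendsto_minus by fastforce
  then show "(\<lambda>n. laplace_exponent x n (l * \<eta> n)) \<longlonglongrightarrow> - ln (expectation (laplace_limit l))"
    unfolding a_def .
  have K: "\<forall>\<^sub>F n in sequentially. laplace_exponent x n (a n) \<le> - ln (expectation (laplace_limit l)) + 1"
    using order_tendstoD(2)[OF lim, of "- ln (expectation (laplace_limit l)) + 1"]
    by (auto elim: eventually_mono)
  have "laplace_exponent x n p \<le> laplace_exponent x n q" if "0 \<le> p" "p \<le> q" for n :: nat and p q
    using laplace_exponent_mono[OF that] by simp
  then have "a \<longlonglongrightarrow> 0"
    using tendsto_0_if_laplace_exponent_bounded[OF x _ K] a by (meson less_imp_le)
  then show "(\<lambda>n. l * \<eta> n) \<longlonglongrightarrow> 0" unfolding a_def .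
  show "(\<lambda>n. v n (l * \<eta> n)) \<longlonglongrightarrow> 0"
    using v_tendsto_0_if_laplace_exponent_bounded[OF x a \<open>a \<longlonglongrightarrow> 0\<close> K diverges]
    unfolding a_def .
qed

text \<open>By the Markov property at time \<open>m\<close>, on an event of the past the Laplace transform at
  time \<open>n\<close> factorises into a deterministic term and one that tends to the probability of the
  event, because \<open>v\<close> started at \<open>l \<eta> n\<close> is close to \<open>0\<close> for \<open>n - m\<close> time units.\<close>
lemma set_integral_laplace_limit_indep:
  assumes l: "0 < l" and q: "0 < expectation (laplace_limit l)"
    and A: "A \<in> sets (natural_filtration M Y (real m))"
  shows "(\<integral>\<omega>\<in>A. laplace_limit l \<omega> \<partial>M) = expectation (laplace_limit l) * prob A"
proof -
  define q where "q = expectation (laplace_limit l)"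
  define a where "a n = l * \<eta> n" for n :: nat
  have a: "0 \<le> a n" for n unfolding a_def using l \<eta>_pos[of n] by simp
  define c where "c n = v (n - m) (a n)" for n
  have "(\<lambda>n. v n (a n)) \<longlonglongrightarrow> 0"
    using laplace_exponent_tendsto_if_expectation_pos(2)[OF l q] unfolding a_def .
  then have c: "0 \<le> c n" "c \<longlonglongrightarrow> 0" for n
    unfolding c_def using v_tendsto_0_earlier[OF a] a v_nonneg by auto
  define D where "D n = exp (- integral {0..real (n - m)} (\<lambda>r. Ph (v r (a n))))" for n
  define B where "B A' n = (\<integral>\<omega>\<in>A'. exp (- Y m \<omega> * c n) \<partial>M)" for A' n
  have sub: "subalgebra M (natural_filtration M Y (real m))"
    using measurable_Y by (rule subalgebra_natural_filtration)
  have markov: "(\<integral>\<omega>\<in>A'. laplace_sample l n \<omega> \<partial>M) = D n * B A' n"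
    if A': "A' \<in> sets (natural_filtration M Y (real m))" and n: "m \<le> n" for A' n
    using CBI_set_integral_exp[OF CBI _ _ a A', of "n - m"] n
    unfolding laplace_sample_def D_def B_def c_def a_def by simp
  have B: "(\<lambda>n. B A' n) \<longlonglongrightarrow> prob A'" if "A' \<in> sets M" for A'
    unfolding B_def using set_integral_exp_Y_tendsto_prob[OF c _ that] by simp
  have B_space: "(\<lambda>n. B (space M) n) \<longlonglongrightarrow> 1" using B[OF sets.top] by (simp add: prob_space)
  have "(\<lambda>n. (\<integral>\<omega>\<in>space M. laplace_sample l n \<omega> \<partial>M) / B (space M) n) \<longlonglongrightarrow> q / 1"
    using set_integral_laplace_sample_tendsto[OF l sets.top] B_space integrable_laplace_limit[OF l]
    unfolding q_def by (intro tendsto_divide) (auto simp: set_integral_space)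
  moreover have "\<forall>\<^sub>F n in sequentially. (\<integral>\<omega>\<in>space M. laplace_sample l n \<omega> \<partial>M) / B (space M) n = D n"
    using order_tendstoD(1)[OF B_space, of "1 / 2", simplified] eventually_ge_at_top[of m]
    by eventually_elim (use markov[OF sets.top] in \<open>auto simp: prob_space\<close>)
  ultimately have "D \<longlonglongrightarrow> q" by (simp add: Lim_transform_eventually)
  have AM: "A \<in> sets M" using sub A unfolding subalgebra_def by auto
  have "(\<lambda>n. D n * B A n) \<longlonglongrightarrow> q * prob A" by (intro tendsto_mult \<open>D \<longlonglongrightarrow> q\<close> B AM)
  moreover have "\<forall>\<^sub>F n in sequentially. D n * B A n = (\<integral>\<omega>\<in>A. laplace_sample l n \<omega> \<partial>M)"
    using eventually_ge_at_top[of m] by eventually_elim (use markov[OF A] in auto)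
  ultimately have "(\<lambda>n. \<integral>\<omega>\<in>A. laplace_sample l n \<omega> \<partial>M) \<longlonglongrightarrow> q * prob A"
    by (rule Lim_transform_eventually)
  then show ?thesis
    using set_integral_laplace_sample_tendsto[OF l AM] LIMSEQ_unique unfolding q_def by blast
qed

lemma laplace_limit_AE_eq_expectation:
  assumes l: "0 < l" and q: "0 < expectation (laplace_limit l)"
  shows "AE \<omega> in M. laplace_limit l \<omega> = expectation (laplace_limit l)"
proof -
  define P where "P = (\<Union>m::nat. sets (natural_filtration M Y m))"
  have sets_F: "sets (natural_filtration M Y m) \<subseteq> sets M" for m
    using subalgebra_natural_filtration[OF measurable_Y] unfolding subalgebra_def by auto
  have "space M \<in> sets (natural_filtration M Y (real 0))"
    using sets.top[of "natural_filtration M Y (real 0)"] by simp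
  then have P: "P \<subseteq> sets M" "space M \<in> P"
    unfolding P_def using sets_F by blast+
  let ?F = "sigma (space M) P"
  have space_F: "space ?F = space M" and sets_F': "sets ?F = sigma_sets (space M) P"
    using P(1) sets.sets_into_space by (auto simp: space_measure_of_conv intro!: sets_measure_of)
  have "Y n \<in> borel_measurable ?F" for n :: nat
    using measurable_sigma_natural_filtrations unfolding P_def .
  then have measurable: "laplace_limit l \<in> borel_measurable ?F"
    unfolding laplace_limit_def laplace_sample_def by measurable
  have subalgebra: "subalgebra M ?F"
    using sets.sigma_sets_subset[OF P(1)] by (simp add: subalgebra_def space_F sets_F')
  have proportional: "(\<integral>\<omega>\<in>A. laplace_limit l \<omega> \<partial>M) = expectation (laplace_limit l) * prob A"
    if "A \<in> sets ?F" for A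
  proof (rule set_integral_proportional_sigma_sets[OF Int_stable_natural_filtrations[of M Y, folded P_def] P
        integrable_laplace_limit[OF l]])
    show "AE \<omega> in M. 0 \<le> laplace_limit l \<omega>" using laplace_limit_bounds[OF l] by eventually_elim simp
    show "A \<in> sigma_sets (space M) P" using that sets_F' by simp
    fix A' assume "A' \<in> P"
    then obtain m :: nat where "A' \<in> sets (natural_filtration M Y m)" unfolding P_def by blast
    then show "(\<integral>\<omega>\<in>A'. laplace_limit l \<omega> \<partial>M) = expectation (laplace_limit l) * prob A'"
      by (rule set_integral_laplace_limit_indep[OF l q])
  qed
  show ?thesis
    by (rule AE_eq_if_set_integral_proportional[OF integrable_laplace_limit[OF l] subalgebra measurable
          proportional])
qed

lemma expectation_laplace_limit_nonneg: "0 < l \<Longrightarrow> 0 \<le> expectation (laplace_limit l)"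
  using laplace_limit_bounds by (intro integral_nonneg_AE) (auto elim: eventually_mono)

lemma scaled_limit_AE_infinity_if_expectation_0:
  assumes "expectation (laplace_limit 1) = 0"
  shows "AE \<omega> in M. scaled_limit \<omega> = \<infinity>"
proof -
  have "AE \<omega> in M. laplace_limit 1 \<omega> = 0"
    using integral_nonneg_eq_0_iff_AE[OF integrable_laplace_limit] laplace_limit_bounds assms
    by (auto elim: eventually_mono)
  with laplace_sample_tendsto[OF zero_less_one] show ?thesis
    by eventually_elim (auto split: if_splits)
qed

lemma scaled_limit_AE_eq_if_expectation_pos:
  assumes q: "0 < expectation (laplace_limit 1)"
  shows "AE \<omega> in M. scaled_limit \<omega> = ereal (- ln (expectation (laplace_limit 1)))"
  using laplace_limit_AE_eq_expectation[OF zero_less_one q] laplace_sample_tendsto[OF zero_less_one]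
    AE_tendsto_scaled_limit
proof eventually_elim
  case (elim \<omega>)
  then have "scaled_limit \<omega> \<noteq> \<infinity>" using q by auto
  then obtain w where w: "scaled_limit \<omega> = ereal w" using elim by (cases "scaled_limit \<omega>") auto
  then have "exp (- w) = expectation (laplace_limit 1)" using elim by simp
  then show ?case using w by (metis ln_exp minus_minus)
qed

lemma constant_scaled_limit_eq_0:
  assumes c: "AE \<omega> in M. scaled_limit \<omega> = ereal c"
  shows "c = 0"
proof -
  have "AE \<omega> in M. 0 \<le> ereal c" using c AE_tendsto_scaled_limit by eventually_elim auto
  then have "0 \<le> c" by simp
  have expectation: "expectation (laplace_limit l) = exp (- l * c)" if "0 < l" for l
  proof -
    have "AE \<omega> in M. laplace_limit l \<omega> = exp (- l * c)"
      using c laplace_sample_tendsto[OF that] by eventually_elim auto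
    then have "expectation (laplace_limit l) = expectation (\<lambda>_. exp (- l * c))"
      by (intro integral_cong_AE) auto
    then show ?thesis by (simp add: prob_space)
  qed
  have pos: "0 < expectation (laplace_limit l)" if "0 < l" for l
    using expectation[OF that] by simp
  note lim1 = laplace_exponent_tendsto_if_expectation_pos[of 1, OF _ pos, simplified]
  note lim2 = laplace_exponent_tendsto_if_expectation_pos[of 2, OF _ pos, simplified]
  have "(\<lambda>n. laplace_exponent x n (2 * \<eta> n) - laplace_exponent x n (\<eta> n)) \<longlonglongrightarrow> 0"
    using \<eta>_pos by (intro laplace_exponent_doubling_diff_tendsto_0 x lim1(1,2) lim2(2)) auto
  moreover have "(\<lambda>n. laplace_exponent x n (2 * \<eta> n) - laplace_exponent x n (\<eta> n)) \<longlonglongrightarrow> 2 * c - c"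
    using lim1(3) lim2(3) expectation by (intro tendsto_diff) auto
  ultimately show "c = 0" using LIMSEQ_unique by force
qed

theorem scaled_limit_zero_or_infinity:
  "(AE \<omega> in M. ((\<lambda>t. ereal (\<eta> t * Y t \<omega>)) \<longlongrightarrow> 0) at_top)
     \<or> (AE \<omega> in M. ((\<lambda>t. ereal (\<eta> t * Y t \<omega>)) \<longlongrightarrow> \<infinity>) at_top)"
proof (cases "expectation (laplace_limit 1) = 0")
  case True
  have "AE \<omega> in M. ((\<lambda>t. ereal (\<eta> t * Y t \<omega>)) \<longlongrightarrow> \<infinity>) at_top"
    using scaled_limit_AE_infinity_if_expectation_0[OF True] AE_tendsto_scaled_limit by eventually_elim auto
  then show ?thesis ..
next
  case False
  then have "0 < expectation (laplace_limit 1)"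
    using expectation_laplace_limit_nonneg[of 1] by simp
  note limit = scaled_limit_AE_eq_if_expectation_pos[OF this]
  then have "AE \<omega> in M. scaled_limit \<omega> = 0"
    using constant_scaled_limit_eq_0[OF limit] by (simp add: zero_ereal_def)
  then have "AE \<omega> in M. ((\<lambda>t. ereal (\<eta> t * Y t \<omega>)) \<longlongrightarrow> 0) at_top"
    using AE_tendsto_scaled_limit by eventually_elim auto
  then show ?thesis ..
qed

end

theorem theorem3:
  fixes b \<sigma> \<beta> x :: real and \<pi> \<nu> :: "real measure"
    and v :: "real \<Rightarrow> real \<Rightarrow> real"
    and M :: "'a measure" and Y :: "real \<Rightarrow> 'a \<Rightarrow> real" and \<eta> :: "real \<Rightarrow> real"
  assumes "branching_params b \<sigma> \<pi>"
    and "immigration_params \<beta> \<nu>"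
    and "b < 0"
    and "solves_v (Psi b \<sigma> \<pi>) v"
    and "x \<ge> 0"
    and "CBI M (Phi \<beta> \<nu>) v x Y"
    and "\<forall>\<epsilon>>0. (\<integral>\<^sup>+ u \<in> {0<..\<epsilon>}. ennreal (Phi \<beta> \<nu> u / \<bar>Psi b \<sigma> \<pi> u\<bar>) \<partial>lborel) = \<infinity>"
    and "\<forall>t\<ge>0. \<eta> t > 0"
    and "AE \<omega> in M. \<exists>L::ereal. ((\<lambda>t. ereal (\<eta> t * Y t \<omega>)) \<longlongrightarrow> L) at_top"
  shows "(AE \<omega> in M. ((\<lambda>t. ereal (\<eta> t * Y t \<omega>)) \<longlongrightarrow> 0) at_top)
       \<or> (AE \<omega> in M. ((\<lambda>t. ereal (\<eta> t * Y t \<omega>)) \<longlongrightarrow> \<infinity>) at_top)"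
proof -
  obtain d where d: "0 < d" "\<And>u. 0 \<le> u \<Longrightarrow> u \<le> d \<Longrightarrow> Psi b \<sigma> \<pi> u \<le> b / 2 * u"
    using Psi_le_half_slope_near_0[OF assms(1,3)] by blast
  interpret scaled_supercritical_CBI "Psi b \<sigma> \<pi>" "Phi \<beta> \<nu>" v d "- b / 2" M Y x \<eta>
  proof unfold_locales
    show "0 < - b / 2" using assms(3) by simp
    show "Psi b \<sigma> \<pi> u \<le> - (- b / 2) * u" if "0 \<le> u" "u \<le> d" for u using d(2)[OF that] by simp
    show "0 < Phi \<beta> \<nu> q" if "0 < q" for q using immigration_paramsD(5)[OF assms(2) that] .
    show "0 < \<eta> t" if "0 \<le> t" for t using assms(8) that by simp
  qed (use assms d continuous_on_Psi continuous_on_Phi Phi_mono in auto)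
  show ?thesis by (rule scaled_limit_zero_or_infinity)
qed

end
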